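(* Let $r\ge1$, $\ell\ge2$. (1) There is a ring homomorphism $\tilde\varphi_\ell:\mathcal{Y}_\ell(A_r)\to\widetilde{\mathcal{T}}_\ell(A_r)$ with $\tilde\varphi_\ell(Y^{(a)}_m(u))=\dfrac{T^{(a-1)}_m(u)T^{(a+1)}_m(u)}{T^{(a)}_{m-1}(u)T^{(a)}_{m+1}(u)}$ for $1\le a\le r$, $1\le m\le\ell-1$, $u\in\mathbb{Z}$. (2) There is a ring homomorphism $\psi_\ell:\widetilde{\mathcal{T}}_\ell(A_r)\to\mathcal{Y}_\ell(A_r)$ such that $\psi_\ell\circ\tilde\varphi_\ell=\mathrm{id}_{\mathcal{Y}_\ell(A_r)}$.
   Context: Rings are commutative with identity. $H=\{(a,m,u):0\le a\le r+1,\ 0\le m\le\ell,\ u\in\mathbb{Z}\}$. $\widetilde{\mathcal{T}}_\ell(A_r)$ is the ring with generators $T^{(a)}_m(u)^{\pm1}$, $(a,m,u)\in H$, and relations: (i) $T^{(a)}_m(u-1)T^{(a)}_m(u+1)=T^{(a)}_{m-1}(u)T^{(a)}_{m+1}(u)+T^{(a-1)}_m(u)T^{(a+1)}_m(u)$ for $1\le a\le r$, $1\le m\le\ell-1$, $u\in\mathbb{Z}$; (ii) (spiral boundary condition) $T^{(a)}_0(u+1)=T^{(a-1)}_0(u)$ ($1\le a\le r+1$), $T^{(a)}_\ell(u+1)=T^{(a+1)}_\ell(u)$ ($0\le a\le r$), $T^{(0)}_m(u+1)=T^{(0)}_{m+1}(u)$ ($0\le m\le\ell-1$), $T^{(r+1)}_m(u+1)=T^{(r+1)}_{m-1}(u)$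 ($1\le m\le\ell$). $\mathcal{Y}_\ell(A_r)$ is the ring with generators $Y^{(a)}_m(u)^{\pm1}$, $(1+Y^{(a)}_m(u))^{-1}$ ($1\le a\le r$, $1\le m\le\ell-1$, $u\in\mathbb{Z}$) and relations $Y^{(a)}_m(u-1)Y^{(a)}_m(u+1)=\dfrac{(1+Y^{(a-1)}_m(u))(1+Y^{(a+1)}_m(u))}{(1+Y^{(a)}_{m-1}(u)^{-1})(1+Y^{(a)}_{m+1}(u)^{-1})}$ for the same range, with $Y^{(0)}_m=Y^{(r+1)}_m=0$ and $Y^{(a)}_0(u)^{-1}=Y^{(a)}_\ell(u)^{-1}=0$. *)

theory Defs
  imports "HOL-Algebra.Ring"
begin

datatype 'g rexpr = Gen 'g | RZero | ROne | RAdd "'g rexpr" "'g rexpr"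
  | RNeg "'g rexpr" | RMul "'g rexpr" "'g rexpr"

fun gens :: "'g rexpr \<Rightarrow> 'g set" where
  "gens (Gen g) = {g}"
| "gens RZero = {}"
| "gens ROne = {}"
| "gens (RAdd x y) = gens x \<union> gens y"
| "gens (RNeg x) = gens x"
| "gens (RMul x y) = gens x \<union> gens y"

inductive req :: "('g rexpr \<times> 'g rexpr) set \<Rightarrow> 'g rexpr \<Rightarrow> 'g rexpr \<Rightarrow> bool"
  for R where
  rel: "(x, y) \<in> R \<Longrightarrow> req R x y"
| refl: "req R x x"
| sym: "req R x y \<Longrightarrow> req R y x"
| trans: "req R x y \<Longrightarrow> req R y z \<Longrightarrow> req R x z"
| add_cong: "req R x x' \<Longrightarrow> req R y y' \<Longrightarrow> req R (RAdd x y) (RAdd x' y')"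
| mul_cong: "req R x x' \<Longrightarrow> req R y y' \<Longrightarrow> req R (RMul x y) (RMul x' y')"
| neg_cong: "req R x x' \<Longrightarrow> req R (RNeg x) (RNeg x')"
| add_assoc: "req R (RAdd (RAdd x y) z) (RAdd x (RAdd y z))"
| add_comm: "req R (RAdd x y) (RAdd y x)"
| add_zero: "req R (RAdd RZero x) x"
| add_neg: "req R (RAdd (RNeg x) x) RZero"
| mul_assoc: "req R (RMul (RMul x y) z) (RMul x (RMul y z))"
| mul_comm: "req R (RMul x y) (RMul y x)"
| mul_one: "req R (RMul ROne x) x"
| distrib: "req R (RMul x (RAdd y z)) (RAdd (RMul x y) (RMul x z))"

definition rclass :: "('g rexpr \<times> 'g rexpr) set \<Rightarrow> 'g rexpr \<Rightarrow> 'g rexpr set" where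
  "rclass R e = {z. req R z e}"

definition presented_ring :: "'g set \<Rightarrow> ('g rexpr \<times> 'g rexpr) set \<Rightarrow> ('g rexpr set) ring" where
  "presented_ring G R =
    \<lparr>carrier = {rclass R e | e. gens e \<subseteq> G},
     mult = (\<lambda>X Y. {z. \<exists>x\<in>X. \<exists>y\<in>Y. req R z (RMul x y)}),
     one = rclass R ROne,
     zero = rclass R RZero,
     add = (\<lambda>X Y. {z. \<exists>x\<in>X. \<exists>y\<in>Y. req R z (RAdd x y)})\<rparr>"

datatype tgen = TG nat nat int | TGinv nat nat int

definition inH :: "nat \<Rightarrow> nat \<Rightarrow> nat \<Rightarrow> nat \<Rightarrow> bool" where
  "inH r l a m \<longleftrightarrow> a \<le> r + 1 \<and> m \<le> l"

definition Tgens :: "nat \<Rightarrow> nat \<Rightarrow> tgen set" where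
  "Tgens r l = {TG a m u | a m u. inH r l a m} \<union> {TGinv a m u | a m u. inH r l a m}"

abbreviation T :: "nat \<Rightarrow> nat \<Rightarrow> int \<Rightarrow> tgen rexpr" where
  "T a m u \<equiv> Gen (TG a m u)"

definition Trels :: "nat \<Rightarrow> nat \<Rightarrow> (tgen rexpr \<times> tgen rexpr) set" where
  "Trels r l =
     {(RMul (T a m u) (Gen (TGinv a m u)), ROne) | a m u. inH r l a m}
   \<union> {(RMul (T a m (u - 1)) (T a m (u + 1)),
        RAdd (RMul (T a (m - 1) u) (T a (m + 1) u)) (RMul (T (a - 1) m u) (T (a + 1) m u)))
       | a m u. 1 \<le> a \<and> a \<le> r \<and> 1 \<le> m \<and> m \<le> l - 1}
   \<union> {(T a 0 (u + 1), T (a - 1) 0 u) | a u. 1 \<le> a \<and> a \<le> r + 1}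
   \<union> {(T a l (u + 1), T (a + 1) l u) | a u. a \<le> r}
   \<union> {(T 0 m (u + 1), T 0 (m + 1) u) | m u. m \<le> l - 1}
   \<union> {(T (r + 1) m (u + 1), T (r + 1) (m - 1) u) | m u. 1 \<le> m \<and> m \<le> l}"

definition Tring :: "nat \<Rightarrow> nat \<Rightarrow> (tgen rexpr set) ring" where
  "Tring r l = presented_ring (Tgens r l) (Trels r l)"

definition Tcls :: "nat \<Rightarrow> nat \<Rightarrow> nat \<Rightarrow> nat \<Rightarrow> int \<Rightarrow> tgen rexpr set" where
  "Tcls r l a m u = rclass (Trels r l) (T a m u)"

text \<open>\<open>YG\<close> = \<open>Y\<close>, \<open>YGinv\<close> = \<open>Y^{-1}\<close>, \<open>WG\<close> = \<open>(1+Y)^{-1}\<close>.\<close>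
datatype ygen = YG nat nat int | YGinv nat nat int | WG nat nat int

definition inI :: "nat \<Rightarrow> nat \<Rightarrow> nat \<Rightarrow> nat \<Rightarrow> bool" where
  "inI r l a m \<longleftrightarrow> 1 \<le> a \<and> a \<le> r \<and> 1 \<le> m \<and> m \<le> l - 1"

definition Ygens :: "nat \<Rightarrow> nat \<Rightarrow> ygen set" where
  "Ygens r l = {YG a m u | a m u. inI r l a m} \<union> {YGinv a m u | a m u. inI r l a m}
     \<union> {WG a m u | a m u. inI r l a m}"

abbreviation Y :: "nat \<Rightarrow> nat \<Rightarrow> int \<Rightarrow> ygen rexpr" where
  "Y a m u \<equiv> Gen (YG a m u)"

text \<open>\<open>1 + Y^{(a)}_m(u)\<close>, with the convention \<open>Y^{(0)}_m = Y^{(r+1)}_m = 0\<close>.\<close>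
definition onePY :: "nat \<Rightarrow> nat \<Rightarrow> nat \<Rightarrow> nat \<Rightarrow> int \<Rightarrow> ygen rexpr" where
  "onePY r l a m u = (if a = 0 \<or> a = r + 1 then ROne else RAdd ROne (Y a m u))"

text \<open>\<open>(1 + Y^{(a)}_m(u)^{-1})^{-1} = Y^{(a)}_m(u) (1+Y^{(a)}_m(u))^{-1}\<close>, with the
  convention \<open>Y^{(a)}_0(u)^{-1} = Y^{(a)}_l(u)^{-1} = 0\<close>.\<close>
definition invOnePYinv :: "nat \<Rightarrow> nat \<Rightarrow> nat \<Rightarrow> nat \<Rightarrow> int \<Rightarrow> ygen rexpr" where
  "invOnePYinv r l a m u = (if m = 0 \<or> m = l then ROne else RMul (Y a m u) (Gen (WG a m u)))"

definition Yrels :: "nat \<Rightarrow> nat \<Rightarrow> (ygen rexpr \<times> ygen rexpr) set" where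
  "Yrels r l =
     {(RMul (Y a m u) (Gen (YGinv a m u)), ROne) | a m u. inI r l a m}
   \<union> {(RMul (RAdd ROne (Y a m u)) (Gen (WG a m u)), ROne) | a m u. inI r l a m}
   \<union> {(RMul (Y a m (u - 1)) (Y a m (u + 1)),
        RMul (RMul (onePY r l (a - 1) m u) (onePY r l (a + 1) m u))
             (RMul (invOnePYinv r l a (m - 1) u) (invOnePYinv r l a (m + 1) u)))
       | a m u. inI r l a m}"

definition Yring :: "nat \<Rightarrow> nat \<Rightarrow> (ygen rexpr set) ring" where
  "Yring r l = presented_ring (Ygens r l) (Yrels r l)"

definition Ycls :: "nat \<Rightarrow> nat \<Rightarrow> nat \<Rightarrow> nat \<Rightarrow> int \<Rightarrow> ygen rexpr set" where
  "Ycls r l a m u = rclass (Yrels r l) (Y a m u)"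

end

theory Submission
  imports Defs
begin

text \<open>
  For a T-system of units \<open>t\<close> (the relations of \<open>T~_l(A_r)\<close> in a commutative ring), the ratios
  \<open>T_ratio t\<close> satisfy the Y-system, which gives \<open>\<phi>\<close>.

  Conversely, from a Y-system \<open>y\<close> we build a T-system \<open>\<tau>\<close> with \<open>T_ratio \<tau> = y\<close>. On the two
  slices \<open>u = 0, 1\<close> the relation \<open>T_ratio \<tau> = y\<close> is a recursion in \<open>m\<close>, whose solutions may be
  rescaled along the diagonals \<open>a + m = const\<close>; this freedom is used to make the boundary values of
  the two slices obey the spiral conditions. The spiral conditions then determine all boundary
  values as a periodic sequence along the perimeter, and the interior is propagated forwards and
  backwards in \<open>u\<close> by the T-system relation in the form
  \<open>\<tau> a m (u + 1) = \<tau> a (m - 1) u \<cdot> \<tau> a (m + 1) u \<cdot> (1 + y a m u) / \<tau> a m (u - 1)\<close>.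
  The Y-system is exactly what is needed to carry \<open>T_ratio \<tau> = y\<close> from two consecutive slices to the next one.

  Sending \<open>T\<close> to \<open>\<tau>\<close> defines \<open>\<psi>\<close>; the composite \<open>\<psi> \<circ> \<phi>\<close> fixes every \<open>Y\<close>, hence also the
  generators \<open>Y\<^sup>-\<^sup>1\<close> and \<open>(1 + Y)\<^sup>-\<^sup>1\<close>, so it is the identity.
\<close>

section \<open>Presented rings\<close>

lemma in_rclass: "z \<in> rclass R e \<longleftrightarrow> req R z e"
  by (simp add: rclass_def)

lemma rclass_eq_iff: "rclass R x = rclass R y \<longleftrightarrow> req R x y"
proof
  assume "rclass R x = rclass R y"
  then have "x \<in> rclass R y" using req.refl[of R x] by (auto simp: rclass_def)
  then show "req R x y" by (simp add: in_rclass)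
qed (auto simp: rclass_def intro: req.trans req.sym)

lemma rclass_eqI: "(x, y) \<in> R \<Longrightarrow> rclass R x = rclass R y"
  by (simp add: rclass_eq_iff req.rel)

lemma presented_ring_mult:
  "rclass R x \<otimes>\<^bsub>presented_ring G R\<^esub> rclass R y = rclass R (RMul x y)"
  unfolding presented_ring_def by (auto simp: rclass_def intro: req.refl req.trans req.mul_cong)

lemma presented_ring_add:
  "rclass R x \<oplus>\<^bsub>presented_ring G R\<^esub> rclass R y = rclass R (RAdd x y)"
  unfolding presented_ring_def by (auto simp: rclass_def intro: req.refl req.trans req.add_cong)

lemma presented_ring_one: "\<one>\<^bsub>presented_ring G R\<^esub> = rclass R ROne"
  unfolding presented_ring_def by simp

lemma presented_ring_zero: "\<zero>\<^bsub>presented_ring G R\<^esub> = rclass R RZero"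
  unfolding presented_ring_def by simp

lemma presented_ring_carrier:
  "X \<in> carrier (presented_ring G R) \<longleftrightarrow> (\<exists>e. X = rclass R e \<and> gens e \<subseteq> G)"
  unfolding presented_ring_def by auto

lemma rclass_in_carrier: "gens e \<subseteq> G \<Longrightarrow> rclass R e \<in> carrier (presented_ring G R)"
  by (auto simp: presented_ring_carrier)

lemma presented_ring_carrierE:
  assumes "X \<in> carrier (presented_ring G R)"
  obtains e where "X = rclass R e" "gens e \<subseteq> G"
  using assms by (auto simp: presented_ring_carrier)

lemmas presented_ring_simps =
  presented_ring_mult presented_ring_add presented_ring_one presented_ring_zero rclass_eq_iff

lemma cring_presented_ring: "cring (presented_ring G R)"
proof -
  let ?P = "presented_ring G R"
  show ?thesis
  proof (rule cringI)
    show "abelian_group ?P"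
    proof (rule abelian_groupI)
      fix x y assume "x \<in> carrier ?P" "y \<in> carrier ?P"
      then show "x \<oplus>\<^bsub>?P\<^esub> y \<in> carrier ?P"
        by (auto elim!: presented_ring_carrierE simp: presented_ring_add rclass_in_carrier)
    next
      show "\<zero>\<^bsub>?P\<^esub> \<in> carrier ?P"
        by (auto simp: presented_ring_zero intro!: rclass_in_carrier)
    next
      fix x y z assume "x \<in> carrier ?P" "y \<in> carrier ?P" "z \<in> carrier ?P"
      then show "x \<oplus>\<^bsub>?P\<^esub> y \<oplus>\<^bsub>?P\<^esub> z = x \<oplus>\<^bsub>?P\<^esub> (y \<oplus>\<^bsub>?P\<^esub> z)"
        by (clarsimp elim!: presented_ring_carrierE) (simp add: presented_ring_simps req.add_assoc)
    next
      fix x y assume "x \<in> carrier ?P" "y \<in> carrier ?P"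
      then show "x \<oplus>\<^bsub>?P\<^esub> y = y \<oplus>\<^bsub>?P\<^esub> x"
        by (clarsimp elim!: presented_ring_carrierE) (simp add: presented_ring_simps req.add_comm)
    next
      fix x assume "x \<in> carrier ?P"
      then show "\<zero>\<^bsub>?P\<^esub> \<oplus>\<^bsub>?P\<^esub> x = x"
        by (clarsimp elim!: presented_ring_carrierE) (simp add: presented_ring_simps req.add_zero)
    next
      fix x assume "x \<in> carrier ?P"
      then obtain e where "x = rclass R e" "gens e \<subseteq> G"
        by (rule presented_ring_carrierE)
      then show "\<exists>y\<in>carrier ?P. y \<oplus>\<^bsub>?P\<^esub> x = \<zero>\<^bsub>?P\<^esub>"
        by (intro bexI[of _ "rclass R (RNeg e)"] rclass_in_carrier) (simp_all add: presented_ring_simps req.add_neg)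
    qed
  next
    show "comm_monoid ?P"
    proof (rule comm_monoidI)
      fix x y assume "x \<in> carrier ?P" "y \<in> carrier ?P"
      then show "x \<otimes>\<^bsub>?P\<^esub> y \<in> carrier ?P"
        by (auto elim!: presented_ring_carrierE simp: presented_ring_mult rclass_in_carrier)
    next
      show "\<one>\<^bsub>?P\<^esub> \<in> carrier ?P"
        by (auto simp: presented_ring_one intro!: rclass_in_carrier)
    next
      fix x y z assume "x \<in> carrier ?P" "y \<in> carrier ?P" "z \<in> carrier ?P"
      then show "x \<otimes>\<^bsub>?P\<^esub> y \<otimes>\<^bsub>?P\<^esub> z = x \<otimes>\<^bsub>?P\<^esub> (y \<otimes>\<^bsub>?P\<^esub> z)"
        by (clarsimp elim!: presented_ring_carrierE) (simp add: presented_ring_simps req.mul_assoc)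
    next
      fix x assume "x \<in> carrier ?P"
      then show "\<one>\<^bsub>?P\<^esub> \<otimes>\<^bsub>?P\<^esub> x = x"
        by (clarsimp elim!: presented_ring_carrierE) (simp add: presented_ring_simps req.mul_one)
    next
      fix x y assume "x \<in> carrier ?P" "y \<in> carrier ?P"
      then show "x \<otimes>\<^bsub>?P\<^esub> y = y \<otimes>\<^bsub>?P\<^esub> x"
        by (clarsimp elim!: presented_ring_carrierE) (simp add: presented_ring_simps req.mul_comm)
    qed
  next
    fix x y z assume "x \<in> carrier ?P" "y \<in> carrier ?P" "z \<in> carrier ?P"
    then show "(x \<oplus>\<^bsub>?P\<^esub> y) \<otimes>\<^bsub>?P\<^esub> z = x \<otimes>\<^bsub>?P\<^esub> z \<oplus>\<^bsub>?P\<^esub> y \<otimes>\<^bsub>?P\<^esub> z"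
      by (clarsimp elim!: presented_ring_carrierE) (simp add: presented_ring_simps,
          meson req.trans req.mul_comm req.distrib req.add_cong)
  qed
qed

primrec eval_rexpr :: "('a, 'b) ring_scheme \<Rightarrow> ('g \<Rightarrow> 'a) \<Rightarrow> 'g rexpr \<Rightarrow> 'a" where
  "eval_rexpr S h (Gen g) = h g"
| "eval_rexpr S h RZero = \<zero>\<^bsub>S\<^esub>"
| "eval_rexpr S h ROne = \<one>\<^bsub>S\<^esub>"
| "eval_rexpr S h (RAdd x y) = eval_rexpr S h x \<oplus>\<^bsub>S\<^esub> eval_rexpr S h y"
| "eval_rexpr S h (RNeg x) = \<ominus>\<^bsub>S\<^esub> eval_rexpr S h x"
| "eval_rexpr S h (RMul x y) = eval_rexpr S h x \<otimes>\<^bsub>S\<^esub> eval_rexpr S h y"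

definition lift_presented :: "('a, 'b) ring_scheme \<Rightarrow> ('g \<Rightarrow> 'a) \<Rightarrow> 'g rexpr set \<Rightarrow> 'a" where
  "lift_presented S h X = eval_rexpr S h (SOME e. e \<in> X)"

context cring
begin

lemma eval_rexpr_closed:
  assumes "\<And>g. h g \<in> carrier R"
  shows "eval_rexpr R h e \<in> carrier R"
  by (induction e) (auto simp: assms)

lemma eval_rexpr_req:
  assumes h: "\<And>g. h g \<in> carrier R"
    and rel: "\<And>x y. (x, y) \<in> Rl \<Longrightarrow> eval_rexpr R h x = eval_rexpr R h y"
    and "req Rl x y"
  shows "eval_rexpr R h x = eval_rexpr R h y"
  using \<open>req Rl x y\<close>
  by (induction rule: req.induct)
    (auto simp: rel eval_rexpr_closed[OF h] a_ac m_ac r_distr l_neg r_neg)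

lemma lift_presented_rclass:
  assumes h: "\<And>g. h g \<in> carrier R"
    and rel: "\<And>x y. (x, y) \<in> Rl \<Longrightarrow> eval_rexpr R h x = eval_rexpr R h y"
  shows "lift_presented R h (rclass Rl e) = eval_rexpr R h e"
proof -
  have "(SOME e'. e' \<in> rclass Rl e) \<in> rclass Rl e"
    by (rule someI[of _ e]) (simp add: in_rclass req.refl)
  then show ?thesis
    unfolding lift_presented_def by (simp add: in_rclass eval_rexpr_req[OF h rel])
qed

lemma lift_presented_hom:
  assumes h: "\<And>g. h g \<in> carrier R"
    and rel: "\<And>x y. (x, y) \<in> Rl \<Longrightarrow> eval_rexpr R h x = eval_rexpr R h y"
  shows "lift_presented R h \<in> ring_hom (presented_ring G Rl) R"
  by (rule ring_hom_memI)
    (auto elim!: presented_ring_carrierE simp: presented_ring_mult presented_ring_add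
      presented_ring_one lift_presented_rclass[OF h rel] eval_rexpr_closed[OF h])

end

lemma presented_ring_hom_ext:
  assumes "cring S"
    and f: "f \<in> ring_hom (presented_ring G Rl) S" and g: "g \<in> ring_hom (presented_ring G Rl) S"
    and gen: "\<And>x. x \<in> G \<Longrightarrow> f (rclass Rl (Gen x)) = g (rclass Rl (Gen x))"
    and X: "X \<in> carrier (presented_ring G Rl)"
  shows "f X = g X"
proof -
  let ?P = "presented_ring G Rl"
  interpret P: cring ?P by (rule cring_presented_ring)
  interpret F: ring_hom_cring ?P S f
    by (intro ring_hom_cring.intro ring_hom_cring_axioms.intro P.cring_axioms assms)
  interpret G: ring_hom_cring ?P S g
    by (intro ring_hom_cring.intro ring_hom_cring_axioms.intro P.cring_axioms assms)
  have neg: "\<ominus>\<^bsub>?P\<^esub> rclass Rl e = rclass Rl (RNeg e)" if "gens e \<subseteq> G" for e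
    using that by (intro P.minus_equality)
      (auto intro!: rclass_in_carrier simp: presented_ring_simps req.add_neg)
  have "f (rclass Rl e) = g (rclass Rl e)" if "gens e \<subseteq> G" for e
    using that
  proof (induction e)
    case (RAdd x y)
    then have x: "rclass Rl x \<in> carrier ?P" and y: "rclass Rl y \<in> carrier ?P"
      by (auto intro: rclass_in_carrier)
    with RAdd show ?case
      using F.hom_add[OF x y] G.hom_add[OF x y] by (simp add: presented_ring_add)
  next
    case (RMul x y)
    then have x: "rclass Rl x \<in> carrier ?P" and y: "rclass Rl y \<in> carrier ?P"
      by (auto intro: rclass_in_carrier)
    with RMul show ?case
      using F.hom_mult[OF x y] G.hom_mult[OF x y] by (simp add: presented_ring_mult)
  next
    case (RNeg x)
    then have x: "rclass Rl x \<in> carrier ?P" by (auto intro: rclass_in_carrier)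
    with RNeg show ?case
      using F.hom_a_inv[OF x] G.hom_a_inv[OF x] by (simp flip: neg)
  qed (use F.hom_zero G.hom_zero F.hom_one G.hom_one in
      \<open>simp_all add: gen presented_ring_zero presented_ring_one\<close>)
  with X show ?thesis by (auto elim: presented_ring_carrierE)
qed

section \<open>Fractions in commutative rings\<close>

context cring
begin

lemma inv_mult_Units:
  assumes "b \<in> Units R" "d \<in> Units R"
  shows "inv (b \<otimes> d) = inv b \<otimes> inv d"
proof (rule comm_inv_char)
  have "(b \<otimes> d) \<otimes> (inv b \<otimes> inv d) = (b \<otimes> inv b) \<otimes> (d \<otimes> inv d)"
    using assms by (simp add: m_ac Units_closed del: Units_r_inv Units_l_inv)
  then show "(b \<otimes> d) \<otimes> (inv b \<otimes> inv d) = \<one>" using assms by simp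
qed (use assms in auto)

lemma frac_mult:
  assumes "a \<in> carrier R" "c \<in> carrier R" "b \<in> Units R" "d \<in> Units R"
  shows "(a \<otimes> inv b) \<otimes> (c \<otimes> inv d) = (a \<otimes> c) \<otimes> inv (b \<otimes> d)"
  using assms by (simp add: inv_mult_Units m_ac Units_closed del: Units_r_inv Units_l_inv)

lemma frac_mult_cancel:
  assumes "y \<in> carrier R" "x \<in> Units R"
  shows "(y \<otimes> inv x) \<otimes> x = y" and "(y \<otimes> x) \<otimes> inv x = y" and "x \<otimes> (y \<otimes> inv x) = y"
proof -
  show "(y \<otimes> inv x) \<otimes> x = y" "(y \<otimes> x) \<otimes> inv x = y"
    using assms by (simp_all add: m_assoc Units_closed)
  then show "x \<otimes> (y \<otimes> inv x) = y" using assms by (simp add: m_comm Units_closed)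
qed

lemma frac_eq_iff:
  assumes "a \<in> carrier R" "c \<in> carrier R" "b \<in> Units R" "d \<in> Units R"
  shows "a \<otimes> inv b = c \<otimes> inv d \<longleftrightarrow> a \<otimes> d = c \<otimes> b"
proof
  assume h: "a \<otimes> inv b = c \<otimes> inv d"
  have "a \<otimes> d = ((a \<otimes> inv b) \<otimes> b) \<otimes> d"
    using assms by (simp add: frac_mult_cancel)
  also have "\<dots> = ((c \<otimes> inv d) \<otimes> d) \<otimes> b"
    using assms by (simp add: h m_ac Units_closed)
  also have "\<dots> = c \<otimes> b" using assms by (simp add: frac_mult_cancel)
  finally show "a \<otimes> d = c \<otimes> b" .
next
  assume h: "a \<otimes> d = c \<otimes> b"
  have "a \<otimes> inv b = ((a \<otimes> d) \<otimes> inv d) \<otimes> inv b"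
    using assms by (simp add: frac_mult_cancel Units_closed)
  also have "\<dots> = ((c \<otimes> b) \<otimes> inv b) \<otimes> inv d"
    using assms by (simp add: h m_ac Units_closed)
  also have "\<dots> = c \<otimes> inv d" using assms by (simp add: frac_mult_cancel Units_closed)
  finally show "a \<otimes> inv b = c \<otimes> inv d" .
qed

lemma frac_mult_frac_cancel:
  assumes "n \<in> carrier R" "d \<in> Units R" "x \<in> Units R"
  shows "(n \<otimes> inv d) \<otimes> (d \<otimes> inv x) = n \<otimes> inv x"
proof -
  have "(n \<otimes> inv d) \<otimes> (d \<otimes> inv x) = n \<otimes> (d \<otimes> inv d) \<otimes> inv x"
    using assms by (simp add: m_ac Units_closed del: Units_r_inv Units_l_inv)
  then show ?thesis using assms by (simp add: Units_closed)
qed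

lemma mult_frac_div_cancel:
  assumes "n \<in> carrier R" "d \<in> Units R" "x \<in> Units R"
  shows "(n \<otimes> (d \<otimes> inv x)) \<otimes> inv d = n \<otimes> inv x"
  using frac_mult_frac_cancel[OF assms] assms by (simp add: m_ac Units_closed)

lemma frac_product_eqI:
  assumes "n1 \<in> carrier R" "n2 \<in> carrier R" "p1 \<in> carrier R" "p2 \<in> carrier R"
      "j1 \<in> carrier R" "j2 \<in> carrier R"
    and "d1 \<in> Units R" "d2 \<in> Units R" "q1 \<in> Units R" "q2 \<in> Units R"
      "k1 \<in> Units R" "k2 \<in> Units R"
    and "(n1 \<otimes> n2) \<otimes> ((q1 \<otimes> q2) \<otimes> (k1 \<otimes> k2)) = ((p1 \<otimes> p2) \<otimes> (j1 \<otimes> j2)) \<otimes> (d1 \<otimes> d2)"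
  shows "(n1 \<otimes> inv d1) \<otimes> (n2 \<otimes> inv d2) =
    ((p1 \<otimes> inv q1) \<otimes> (p2 \<otimes> inv q2)) \<otimes> ((j1 \<otimes> inv k1) \<otimes> (j2 \<otimes> inv k2))"
  using assms by (simp add: frac_mult frac_eq_iff del: Units_r_inv Units_l_inv)

lemma mult_interchange:
  assumes "a \<in> carrier R" "b \<in> carrier R" "c \<in> carrier R" "d \<in> carrier R"
  shows "(a \<otimes> b) \<otimes> (c \<otimes> d) = (a \<otimes> c) \<otimes> (b \<otimes> d)"
  using assms by (simp add: m_ac)

lemma ratio_propagation:
  assumes "xw \<in> carrier R" "yv \<in> carrier R" "yw \<in> carrier R" "zv \<in> carrier R" "zw \<in> carrier R"
    "M \<in> carrier R" "P \<in> carrier R" "J \<in> carrier R" and "xv \<in> Units R"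
    and "xv \<otimes> xw = M \<otimes> P" "(zv \<otimes> zw) \<otimes> J = M" "yv \<otimes> yw = P \<otimes> J" "xv = yv \<otimes> zv"
  shows "xw = yw \<otimes> zw"
proof -
  have "xv \<otimes> xw = ((zv \<otimes> zw) \<otimes> J) \<otimes> P" by (simp only: assms(10,11))
  also have "\<dots> = (zv \<otimes> zw) \<otimes> (P \<otimes> J)" using assms(1-8) by (simp add: m_ac)
  also have "\<dots> = (yv \<otimes> zv) \<otimes> (yw \<otimes> zw)" using assms(1-8) by (simp add: assms(12)[symmetric] m_ac)
  finally have "xv \<otimes> xw = xv \<otimes> (yw \<otimes> zw)" by (simp only: assms(13))
  then show ?thesis using assms(1,3,5,9) by simp
qed

lemma one_plus_frac:
  assumes "n \<in> carrier R" "d \<in> Units R"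
  shows "\<one> \<oplus> n \<otimes> inv d = (d \<oplus> n) \<otimes> inv d"
  using assms by (simp add: l_distr Units_closed)

lemma mult_eq_one_imp_inv:
  assumes "x \<in> carrier R" "y \<in> carrier R" "x \<otimes> y = \<one>"
  shows "x \<in> Units R" and "inv x = y"
  using assms comm_inv_char by (auto simp: Units_def m_comm intro!: bexI[of _ y])

lemma inv_frac:
  assumes "b \<in> Units R" "d \<in> Units R"
  shows "inv (b \<otimes> inv d) = d \<otimes> inv b"
  using assms frac_mult[of b d d b]
  by (intro mult_eq_one_imp_inv(2)) (auto simp: Units_closed m_comm)

end

lemma ring_hom_inv:
  assumes "cring R" "cring S" "h \<in> ring_hom R S" "x \<in> Units R"
  shows "h (inv\<^bsub>R\<^esub> x) = inv\<^bsub>S\<^esub> (h x)"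
proof -
  interpret R: cring R by fact
  interpret S: cring S by fact
  have c: "x \<in> carrier R" "inv\<^bsub>R\<^esub> x \<in> carrier R" using assms by auto
  have "h x \<otimes>\<^bsub>S\<^esub> h (inv\<^bsub>R\<^esub> x) = \<one>\<^bsub>S\<^esub>"
    using assms c by (simp flip: ring_hom_mult add: ring_hom_one)
  then show ?thesis
    using c assms(3) by (intro S.mult_eq_one_imp_inv(2)[symmetric]) (auto simp: ring_hom_closed)
qed

section \<open>T-systems and Y-systems in a commutative ring\<close>

text \<open>Ring-level versions of \<open>onePY\<close> and \<open>invOnePYinv\<close>, with the same boundary conventions;
  \<open>T_ratio S t a m u\<close> is the prescribed image of \<open>Y a m u\<close> under \<open>\<phi>\<close>.\<close>

definition one_plus_Y ::
    "('a, 'b) ring_scheme \<Rightarrow> nat \<Rightarrow> (nat \<Rightarrow> nat \<Rightarrow> int \<Rightarrow> 'a) \<Rightarrow> nat \<Rightarrow> nat \<Rightarrow> int \<Rightarrow> 'a" where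
  "one_plus_Y S r y a m u = (if a = 0 \<or> a = r + 1 then \<one>\<^bsub>S\<^esub> else \<one>\<^bsub>S\<^esub> \<oplus>\<^bsub>S\<^esub> y a m u)"

definition inv_one_plus_Yinv ::
    "('a, 'b) ring_scheme \<Rightarrow> nat \<Rightarrow> (nat \<Rightarrow> nat \<Rightarrow> int \<Rightarrow> 'a) \<Rightarrow> nat \<Rightarrow> nat \<Rightarrow> int \<Rightarrow> 'a" where
  "inv_one_plus_Yinv S l y a m u =
     (if m = 0 \<or> m = l then \<one>\<^bsub>S\<^esub> else y a m u \<otimes>\<^bsub>S\<^esub> inv\<^bsub>S\<^esub> (\<one>\<^bsub>S\<^esub> \<oplus>\<^bsub>S\<^esub> y a m u))"

definition T_ratio :: "('a, 'b) ring_scheme \<Rightarrow> (nat \<Rightarrow> nat \<Rightarrow> int \<Rightarrow> 'a) \<Rightarrow> nat \<Rightarrow> nat \<Rightarrow> int \<Rightarrow> 'a" where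
  "T_ratio S t a m u =
     (t (a - 1) m u \<otimes>\<^bsub>S\<^esub> t (a + 1) m u) \<otimes>\<^bsub>S\<^esub> inv\<^bsub>S\<^esub> (t a (m - 1) u \<otimes>\<^bsub>S\<^esub> t a (m + 1) u)"

lemma inI_iff: "inI r l a m \<longleftrightarrow> 1 \<le> a \<and> a \<le> r \<and> 1 \<le> m \<and> m + 1 \<le> l"
  by (auto simp: inI_def)

locale spiral_boundary = cring S for S (structure) +
  fixes r l :: nat and t :: "nat \<Rightarrow> nat \<Rightarrow> int \<Rightarrow> 'a"
  assumes t_closed [simp]: "t a m u \<in> carrier S"
    and spiral_bottom: "1 \<le> a \<Longrightarrow> a \<le> r + 1 \<Longrightarrow> t a 0 (u + 1) = t (a - 1) 0 u"
    and spiral_top: "a \<le> r \<Longrightarrow> t a l (u + 1) = t (a + 1) l u"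
    and spiral_left: "m \<le> l - 1 \<Longrightarrow> t 0 m (u + 1) = t 0 (m + 1) u"
    and spiral_right: "1 \<le> m \<Longrightarrow> m \<le> l \<Longrightarrow> t (r + 1) m (u + 1) = t (r + 1) (m - 1) u"
begin

lemma column_boundary_product:
  assumes "a = 0 \<or> a = r + 1" "1 \<le> m" "m \<le> l - 1"
  shows "t a m (u - 1) \<otimes> t a m (u + 1) = t a (m - 1) u \<otimes> t a (m + 1) u"
proof (cases "a = 0")
  case True
  have "t 0 (m - 1) ((u - 1) + 1) = t 0 (m - 1 + 1) (u - 1)" using assms by (intro spiral_left) simp
  moreover have "t 0 m (u + 1) = t 0 (m + 1) u" using assms by (intro spiral_left) simp
  ultimately show ?thesis using True assms by (simp add: m_comm)
next
  case False
  with assms have "a = r + 1" by simp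
  moreover have "t (r + 1) (m + 1) ((u - 1) + 1) = t (r + 1) (m + 1 - 1) (u - 1)"
    using assms by (intro spiral_right) simp_all
  moreover have "t (r + 1) m (u + 1) = t (r + 1) (m - 1) u" using assms by (intro spiral_right) simp_all
  ultimately show ?thesis using assms by (simp add: m_comm)
qed

lemma row_boundary_product:
  assumes "m = 0 \<or> m = l" "1 \<le> a" "a \<le> r"
  shows "t a m (u - 1) \<otimes> t a m (u + 1) = t (a - 1) m u \<otimes> t (a + 1) m u"
proof (cases "m = 0")
  case True
  have "t (a + 1) 0 ((u - 1) + 1) = t (a + 1 - 1) 0 (u - 1)" using assms by (intro spiral_bottom) simp_all
  moreover have "t a 0 (u + 1) = t (a - 1) 0 u" using assms by (intro spiral_bottom) simp_all
  ultimately show ?thesis using True assms by (simp add: m_comm)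
next
  case False
  with assms have "m = l" by simp
  moreover have "t (a - 1) l ((u - 1) + 1) = t (a - 1 + 1) l (u - 1)" using assms by (intro spiral_top) simp
  moreover have "t a l (u + 1) = t (a + 1) l u" using assms by (intro spiral_top) simp
  ultimately show ?thesis using assms by (simp add: m_comm)
qed

end

locale T_system = spiral_boundary +
  assumes t_unit [simp]: "t a m u \<in> Units S"
    and T_relation: "inI r l a m \<Longrightarrow>
      t a m (u - 1) \<otimes> t a m (u + 1) = t a (m - 1) u \<otimes> t a (m + 1) u \<oplus> t (a - 1) m u \<otimes> t (a + 1) m u"

locale Y_system = cring S for S (structure) +
  fixes r l :: nat and y :: "nat \<Rightarrow> nat \<Rightarrow> int \<Rightarrow> 'a"
  assumes r_pos: "1 \<le> r" and l_ge_2: "2 \<le> l"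
    and y_unit [simp]: "y a m u \<in> Units S"
    and one_plus_y_unit: "inI r l a m \<Longrightarrow> \<one> \<oplus> y a m u \<in> Units S"
    and Y_relation: "inI r l a m \<Longrightarrow>
      y a m (u - 1) \<otimes> y a m (u + 1) =
        (one_plus_Y S r y (a - 1) m u \<otimes> one_plus_Y S r y (a + 1) m u) \<otimes>
        (inv_one_plus_Yinv S l y a (m - 1) u \<otimes> inv_one_plus_Yinv S l y a (m + 1) u)"

section \<open>From T-systems to Y-systems\<close>

context T_system
begin

lemma T_ratio_unit: "T_ratio S t a m u \<in> Units S"
  by (simp add: T_ratio_def)

lemma one_plus_T_ratio:
  assumes "inI r l a m"
  shows "\<one> \<oplus> T_ratio S t a m u = (t a m (u - 1) \<otimes> t a m (u + 1)) \<otimes> inv (t a (m - 1) u \<otimes> t a (m + 1) u)"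
  unfolding T_ratio_def by (simp add: one_plus_frac T_relation[OF assms])

lemma one_plus_Y_T_ratio:
  assumes "a \<le> r + 1" "1 \<le> m" "m \<le> l - 1"
  shows "one_plus_Y S r (T_ratio S t) a m u =
    (t a m (u - 1) \<otimes> t a m (u + 1)) \<otimes> inv (t a (m - 1) u \<otimes> t a (m + 1) u)"
proof (cases "a = 0 \<or> a = r + 1")
  case True
  then show ?thesis using assms by (simp add: one_plus_Y_def column_boundary_product)
next
  case False
  with assms show ?thesis by (simp add: one_plus_Y_def one_plus_T_ratio inI_def)
qed

lemma inv_one_plus_Yinv_T_ratio:
  assumes "1 \<le> a" "a \<le> r" "m \<le> l"
  shows "inv_one_plus_Yinv S l (T_ratio S t) a m u =
    (t (a - 1) m u \<otimes> t (a + 1) m u) \<otimes> inv (t a m (u - 1) \<otimes> t a m (u + 1))"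
proof (cases "m = 0 \<or> m = l")
  case True
  then show ?thesis using assms by (simp add: inv_one_plus_Yinv_def row_boundary_product)
next
  case False
  with assms have i: "inI r l a m" by (auto simp: inI_def)
  have "T_ratio S t a m u \<otimes> inv (\<one> \<oplus> T_ratio S t a m u) =
      ((t (a - 1) m u \<otimes> t (a + 1) m u) \<otimes> inv (t a (m - 1) u \<otimes> t a (m + 1) u)) \<otimes>
      ((t a (m - 1) u \<otimes> t a (m + 1) u) \<otimes> inv (t a m (u - 1) \<otimes> t a m (u + 1)))"
    unfolding one_plus_T_ratio[OF i] by (simp add: inv_frac T_ratio_def)
  also have "\<dots> = (t (a - 1) m u \<otimes> t (a + 1) m u) \<otimes> inv (t a m (u - 1) \<otimes> t a m (u + 1))"
    by (simp add: frac_mult_frac_cancel)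
  finally show ?thesis using False by (simp add: inv_one_plus_Yinv_def)
qed

lemma Y_system_T_ratio:
  assumes "1 \<le> r" "2 \<le> l"
  shows "Y_system S r l (T_ratio S t)"
proof (unfold_locales)
  fix a m u assume i: "inI r l a m"
  then have b: "1 \<le> a" "a \<le> r" "1 \<le> m" "m \<le> l - 1" "a - 1 \<le> r + 1" "a + 1 \<le> r + 1"
      "m - 1 \<le> l" "m + 1 \<le> l"
    by (auto simp: inI_def)
  show "\<one> \<oplus> T_ratio S t a m u \<in> Units S" by (simp add: one_plus_T_ratio[OF i])
  show "T_ratio S t a m (u - 1) \<otimes> T_ratio S t a m (u + 1) =
      (one_plus_Y S r (T_ratio S t) (a - 1) m u \<otimes> one_plus_Y S r (T_ratio S t) (a + 1) m u) \<otimes>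
      (inv_one_plus_Yinv S l (T_ratio S t) a (m - 1) u \<otimes> inv_one_plus_Yinv S l (T_ratio S t) a (m + 1) u)"
    unfolding one_plus_Y_T_ratio[OF b(5,3,4)] one_plus_Y_T_ratio[OF b(6,3,4)]
      inv_one_plus_Yinv_T_ratio[OF b(1,2,7)] inv_one_plus_Yinv_T_ratio[OF b(1,2,8)] T_ratio_def
    by (rule frac_product_eqI) (simp_all add: m_ac)
qed (use assms T_ratio_unit in auto)

end

section \<open>From Y-systems to T-systems\<close>

context Y_system
begin

lemma y_closed [simp]: "y a m u \<in> carrier S"
  by (rule Units_closed[OF y_unit])

lemma one_plus_Y_closed [simp]: "one_plus_Y S r y a m u \<in> carrier S"
  by (simp add: one_plus_Y_def)

lemma inv_one_plus_Yinv_closed: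
  "inI r l a m \<or> m = 0 \<or> m = l \<Longrightarrow> inv_one_plus_Yinv S l y a m u \<in> carrier S"
  using one_plus_y_unit[of a m] by (auto simp: inv_one_plus_Yinv_def)

definition y_int :: "int \<Rightarrow> nat \<Rightarrow> int \<Rightarrow> 'a" where
  "y_int a m u = (if 1 \<le> a \<and> inI r l (nat a) m then y (nat a) m u else \<one>)"

lemma y_int_unit [simp]: "y_int a m u \<in> Units S"
  by (simp add: y_int_def)

lemma y_int_closed [simp]: "y_int a m u \<in> carrier S"
  by (rule Units_closed[OF y_int_unit])

text \<open>The relation \<open>T_ratio \<tau> = y\<close> on a single slice, solved by recursion in \<open>m\<close> (see
  \<open>seed_relation\<close>). The column index ranges over \<open>\<int>\<close>, so the recursion needs no boundary.\<close>
fun seed :: "int \<Rightarrow> nat \<Rightarrow> int \<Rightarrow> 'a" where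
  "seed u 0 a = \<one>"
| "seed u (Suc 0) a = \<one>"
| "seed u (Suc (Suc m)) a =
     ((seed u (Suc m) (a - 1) \<otimes> seed u (Suc m) (a + 1)) \<otimes> y_int a (Suc m) u) \<otimes> inv (seed u m a)"

lemma seed_unit [simp]: "seed u m a \<in> Units S"
  by (induction u m a rule: seed.induct) simp_all

lemma seed_closed [simp]: "seed u m a \<in> carrier S"
  by (rule Units_closed[OF seed_unit])

lemma seed_relation:
  assumes "1 \<le> m"
  shows "seed u (m - 1) a \<otimes> seed u (m + 1) a = (seed u m (a - 1) \<otimes> seed u m (a + 1)) \<otimes> y_int a m u"
proof -
  obtain n where n: "m = Suc n" using assms by (cases m) auto
  have "seed u (Suc (Suc n)) a \<otimes> seed u n a =
      (seed u (Suc n) (a - 1) \<otimes> seed u (Suc n) (a + 1)) \<otimes> y_int a (Suc n) u"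
    by (simp add: frac_mult_cancel(1))
  then show ?thesis using n by (simp add: m_comm)
qed

text \<open>Multiplying \<open>inv (seed u m a)\<close> by a factor depending only on the diagonal \<open>a + m\<close> preserves
  the relation \<open>T_ratio \<tau> = y\<close>. Such gauge factors are chosen for \<open>u = 0, 1\<close> so that the boundary values of the
  two slices satisfy the spiral conditions: each of these conditions relates \<open>gauge1 \<alpha>\<close> to
  \<open>gauge0 (\<alpha> - 1)\<close> (\<open>linked_below \<alpha>\<close>) or \<open>gauge0 (\<alpha> + 1)\<close> to \<open>gauge1 \<alpha>\<close> (\<open>linked_above \<alpha>\<close>), and
  they can be solved by recursion on \<open>\<alpha>\<close>.\<close>

definition linked_below :: "nat \<Rightarrow> bool" where
  "linked_below \<alpha> \<longleftrightarrow> (2 \<le> \<alpha> \<and> \<alpha> \<le> r) \<or> (r + 3 \<le> \<alpha> \<and> \<alpha> \<le> r + l)"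

definition linked_above :: "nat \<Rightarrow> bool" where
  "linked_above \<alpha> \<longleftrightarrow> (1 \<le> \<alpha> \<and> \<alpha> + 2 \<le> l) \<or> (l + 1 \<le> \<alpha> \<and> \<alpha> + 1 \<le> l + r)"

definition link_below :: "nat \<Rightarrow> 'a" where
  "link_below \<alpha> = (if r + 3 \<le> \<alpha> \<and> \<alpha> \<le> r + l
     then seed 1 (\<alpha> - r - 1) (int r + 1) \<otimes> inv (seed 0 (\<alpha> - r - 2) (int r + 1)) else \<one>)"

definition link_above :: "nat \<Rightarrow> 'a" where
  "link_above \<alpha> =
    (if 1 \<le> \<alpha> \<and> \<alpha> + 2 \<le> l then seed 1 \<alpha> 0 \<otimes> inv (seed 0 (\<alpha> + 1) 0)
     else if l + 1 \<le> \<alpha> \<and> \<alpha> + 1 \<le> l + r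
     then seed 1 l (int (\<alpha> - l)) \<otimes> inv (seed 0 l (int (\<alpha> - l) + 1))
     else \<one>)"

lemma link_below_unit [simp]: "link_below \<alpha> \<in> Units S"
  by (simp add: link_below_def)

lemma link_above_unit [simp]: "link_above \<alpha> \<in> Units S"
  by (simp add: link_above_def)

fun gauge0 :: "nat \<Rightarrow> 'a" where
  "gauge0 0 = \<one>"
| "gauge0 (Suc \<alpha>) =
     (if linked_above \<alpha>
      then (if linked_below \<alpha> then gauge0 (\<alpha> - 1) \<otimes> link_below \<alpha> else \<one>) \<otimes> inv (link_above \<alpha>)
      else \<one>)"

definition gauge1 :: "nat \<Rightarrow> 'a" where
  "gauge1 \<alpha> = (if linked_below \<alpha> then gauge0 (\<alpha> - 1) \<otimes> link_below \<alpha> else \<one>)"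

lemma gauge0_unit [simp]: "gauge0 \<alpha> \<in> Units S"
  by (induction \<alpha> rule: gauge0.induct) simp_all

lemma gauge1_unit [simp]: "gauge1 \<alpha> \<in> Units S"
  by (simp add: gauge1_def)

lemma gauge0_closed [simp]: "gauge0 \<alpha> \<in> carrier S"
  by (rule Units_closed[OF gauge0_unit])

lemma gauge1_closed [simp]: "gauge1 \<alpha> \<in> carrier S"
  by (rule Units_closed[OF gauge1_unit])

lemma gauge0_Suc: "linked_above \<alpha> \<Longrightarrow> gauge0 (Suc \<alpha>) = gauge1 \<alpha> \<otimes> inv (link_above \<alpha>)"
  by (simp add: gauge1_def)

declare gauge0.simps(2) [simp del]

definition gauge :: "int \<Rightarrow> nat \<Rightarrow> 'a" where
  "gauge u = (if u = 0 then gauge0 else gauge1)"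

lemma gauge_unit [simp]: "gauge u \<alpha> \<in> Units S"
  by (simp add: gauge_def)

lemma gauge_closed [simp]: "gauge u \<alpha> \<in> carrier S"
  by (rule Units_closed[OF gauge_unit])

definition init :: "int \<Rightarrow> nat \<Rightarrow> nat \<Rightarrow> 'a" where
  "init u a m = gauge u (a + m) \<otimes> inv (seed u m (int a))"

lemma init_unit [simp]: "init u a m \<in> Units S"
  by (simp add: init_def)

lemma init_ratio:
  assumes "inI r l a m"
  shows "init u (a - 1) m \<otimes> init u (a + 1) m = y a m u \<otimes> (init u a (m - 1) \<otimes> init u a (m + 1))"
proof -
  from assms have a: "1 \<le> a" "1 \<le> m" by (auto simp: inI_def)
  have diag: "a - 1 + m = a + (m - 1)" "a + 1 + m = a + (m + 1)" using a by auto
  have seed_rel: "seed u (m - 1) (int a) \<otimes> seed u (m + 1) (int a) =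
      (seed u m (int a - 1) \<otimes> seed u m (int a + 1)) \<otimes> y a m u"
    using seed_relation[OF a(2), of u "int a"] assms a by (simp add: y_int_def)
  have int: "int (a - 1) = int a - 1" "int (a + 1) = int a + 1" using a by auto
  have "init u (a - 1) m \<otimes> init u (a + 1) m =
      (gauge u (a + (m - 1)) \<otimes> gauge u (a + (m + 1))) \<otimes> inv (seed u m (int a - 1) \<otimes> seed u m (int a + 1))"
    unfolding init_def diag int by (simp add: frac_mult)
  also have "\<dots> = (y a m u \<otimes> (gauge u (a + (m - 1)) \<otimes> gauge u (a + (m + 1)))) \<otimes>
      inv (seed u (m - 1) (int a) \<otimes> seed u (m + 1) (int a))"
    unfolding seed_rel by (subst frac_eq_iff) (simp_all add: m_ac)
  also have "\<dots> = y a m u \<otimes> (init u a (m - 1) \<otimes> init u a (m + 1))"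
    unfolding init_def by (subst frac_mult) (simp_all add: m_assoc)
  finally show ?thesis .
qed

lemma init_spiral_bottom:
  assumes "2 \<le> a" "a \<le> r"
  shows "init 1 a 0 = init 0 (a - 1) 0"
proof -
  have "linked_below a" "link_below a = \<one>"
    using assms by (simp_all add: linked_below_def link_below_def)
  with assms show ?thesis by (simp add: init_def gauge_def gauge1_def)
qed

lemma init_spiral_left:
  assumes "1 \<le> m" "m + 2 \<le> l"
  shows "init 1 0 m = init 0 0 (m + 1)"
proof -
  have "linked_above m" using assms by (simp add: linked_above_def)
  then have "init 0 0 (m + 1) = (gauge1 m \<otimes> inv (link_above m)) \<otimes> inv (seed 0 (m + 1) 0)"
    by (simp add: init_def gauge_def gauge0_Suc)
  also have "\<dots> = gauge1 m \<otimes> inv (seed 1 m 0)"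
    using assms by (simp add: link_above_def inv_frac mult_frac_div_cancel)
  finally show ?thesis by (simp add: init_def gauge_def)
qed

lemma init_spiral_top:
  assumes "1 \<le> a" "a + 1 \<le> r"
  shows "init 1 a l = init 0 (a + 1) l"
proof -
  have "linked_above (a + l)" using assms by (simp add: linked_above_def)
  then have "init 0 (a + 1) l = (gauge1 (a + l) \<otimes> inv (link_above (a + l))) \<otimes> inv (seed 0 l (int a + 1))"
    by (simp add: init_def gauge_def gauge0_Suc[symmetric] add_ac)
  also have "\<dots> = gauge1 (a + l) \<otimes> inv (seed 1 l (int a))"
    using assms l_ge_2 by (simp add: link_above_def inv_frac mult_frac_div_cancel)
  finally show ?thesis by (simp add: init_def gauge_def)
qed

lemma init_spiral_right:
  assumes "2 \<le> m" "m + 1 \<le> l"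
  shows "init 1 (r + 1) m = init 0 (r + 1) (m - 1)"
proof -
  have diag: "r + 1 + m - 1 = r + 1 + (m - 1)" using assms by simp
  have int: "int (r + 1) = int r + 1" by simp
  have "linked_below (r + 1 + m)" using assms by (simp add: linked_below_def)
  then have "init 1 (r + 1) m = (gauge0 (r + 1 + (m - 1)) \<otimes> link_below (r + 1 + m)) \<otimes> inv (seed 1 m (int r + 1))"
    unfolding init_def gauge_def gauge1_def int diag using assms by simp
  also have "\<dots> = gauge0 (r + 1 + (m - 1)) \<otimes> inv (seed 0 (m - 1) (int r + 1))"
    using assms by (simp add: link_below_def mult_frac_div_cancel)
  also have "\<dots> = init 0 (r + 1) (m - 1)"
    unfolding init_def gauge_def int by simp
  finally show ?thesis .
qed

text \<open>Read along the boundary of the rectangle \<open>[0, r + 1] \<times> [0, l]\<close>, the spiral conditions say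
  that the boundary value at position \<open>k\<close> (counted along the boundary from the corner \<open>(r + 1, 0)\<close>)
  at time \<open>u\<close> depends only on \<open>k + u\<close>. The boundary values are therefore given by one sequence of
  period \<open>2 (r + l + 1)\<close>, whose terms are read off from the two initial slices.\<close>

definition period :: nat where
  "period = 2 * (r + l + 1)"

definition perimeter_pos :: "nat \<Rightarrow> nat \<Rightarrow> nat" where
  "perimeter_pos a m =
    (if m = 0 then r + 1 - a else if a = 0 then r + 1 + m else if m = l then r + 1 + l + a else period - m)"

definition boundary_seq :: "nat \<Rightarrow> 'a" where
  "boundary_seq k =
    (if k = 0 then init 1 (r + 1) 1
     else if k \<le> r then init 0 (r + 1 - k) 0
     else if k = r + 1 then init 1 1 0
     else if k \<le> r + l then init 0 0 (k - r - 1)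
     else if k = r + l + 1 then init 1 0 (l - 1)
     else if k \<le> 2 * r + l + 1 then init 0 (k - r - l - 1) l
     else if k = 2 * r + l + 2 then init 1 r l
     else init 0 (r + 1) (period - k))"

definition boundary :: "int \<Rightarrow> nat \<Rightarrow> nat \<Rightarrow> 'a" where
  "boundary u a m = boundary_seq (nat ((u + int (perimeter_pos a m)) mod int period))"

lemma boundary_unit [simp]: "boundary u a m \<in> Units S"
  by (simp add: boundary_def boundary_seq_def)

definition on_edge :: "nat \<Rightarrow> nat \<Rightarrow> bool" where
  "on_edge a m \<longleftrightarrow>
    (m = 0 \<and> 1 \<le> a \<and> a \<le> r) \<or> (a = 0 \<and> 1 \<le> m \<and> m + 1 \<le> l) \<or>
    (m = l \<and> 1 \<le> a \<and> a \<le> r) \<or> (a = r + 1 \<and> 1 \<le> m \<and> m + 1 \<le> l)"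

lemma boundary_0:
  assumes "on_edge a m"
  shows "boundary 0 a m = init 0 a m"
proof -
  have "perimeter_pos a m < period"
    using assms r_pos l_ge_2 by (auto simp: on_edge_def perimeter_pos_def period_def)
  then have pos: "nat ((0 + int (perimeter_pos a m)) mod int period) = perimeter_pos a m" by simp
  show ?thesis
    unfolding boundary_def pos using assms r_pos l_ge_2 unfolding on_edge_def
    by (elim disjE) (auto simp: perimeter_pos_def boundary_seq_def period_def)
qed

lemma boundary_1_bottom:
  assumes "1 \<le> a" "a \<le> r"
  shows "boundary 1 a 0 = init 1 a 0"
proof -
  have "perimeter_pos a 0 = r + 1 - a" by (simp add: perimeter_pos_def)
  then have pos: "nat ((1 + int (perimeter_pos a 0)) mod int period) = r + 2 - a"
    using assms unfolding period_def by (simp add: of_nat_diff)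
  show ?thesis
  proof (cases "a = 1")
    case True
    then show ?thesis unfolding boundary_def pos by (simp add: boundary_seq_def)
  next
    case False
    then have "r + 2 - a \<noteq> 0" "r + 2 - a \<le> r" "r + 1 - (r + 2 - a) = a - 1" using assms by auto
    then have "boundary_seq (r + 2 - a) = init 0 (a - 1) 0" unfolding boundary_seq_def by simp
    then show ?thesis using assms False init_spiral_bottom[of a] unfolding boundary_def pos by simp
  qed
qed

lemma boundary_1_left:
  assumes "1 \<le> m" "m + 1 \<le> l"
  shows "boundary 1 0 m = init 1 0 m"
proof -
  have "perimeter_pos 0 m = r + 1 + m" using assms by (simp add: perimeter_pos_def)
  then have pos: "nat ((1 + int (perimeter_pos 0 m)) mod int period) = r + 2 + m"
    using assms unfolding period_def by simp
  show ?thesis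
  proof (cases "m + 1 = l")
    case True
    then have "l - 1 = m" by simp
    then show ?thesis using assms True unfolding boundary_def pos by (simp add: boundary_seq_def)
  next
    case False
    then have "boundary_seq (r + 2 + m) = init 0 0 (m + 1)" using assms by (simp add: boundary_seq_def)
    then show ?thesis using assms False init_spiral_left[of m] unfolding boundary_def pos by simp
  qed
qed

lemma boundary_1_top:
  assumes "1 \<le> a" "a \<le> r"
  shows "boundary 1 a l = init 1 a l"
proof -
  have "perimeter_pos a l = r + 1 + l + a" using assms l_ge_2 by (simp add: perimeter_pos_def)
  then have pos: "nat ((1 + int (perimeter_pos a l)) mod int period) = r + 2 + l + a"
    using assms l_ge_2 unfolding period_def by simp
  show ?thesis
  proof (cases "a = r")
    case True
    then show ?thesis using assms unfolding boundary_def pos by (simp add: boundary_seq_def)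
  next
    case False
    then have "boundary_seq (r + 2 + l + a) = init 0 (a + 1) l" using assms by (simp add: boundary_seq_def)
    then show ?thesis using assms False init_spiral_top[of a] unfolding boundary_def pos by simp
  qed
qed

lemma boundary_1_right:
  assumes "1 \<le> m" "m + 1 \<le> l"
  shows "boundary 1 (r + 1) m = init 1 (r + 1) m"
proof -
  have p: "perimeter_pos (r + 1) m = period - m" using assms by (simp add: perimeter_pos_def)
  show ?thesis
  proof (cases "m = 1")
    case True
    have "nat ((1 + int (perimeter_pos (r + 1) m)) mod int period) = 0"
      using assms True unfolding p period_def by (simp add: of_nat_diff)
    then show ?thesis using True unfolding boundary_def by (simp add: boundary_seq_def)
  next
    case False
    have pos: "nat ((1 + int (perimeter_pos (r + 1) m)) mod int period) = period + 1 - m"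
      using assms False unfolding p period_def by (simp add: of_nat_diff)
    have "period + 1 - m \<noteq> 0" "\<not> period + 1 - m \<le> r" "period + 1 - m \<noteq> r + 1"
      "\<not> period + 1 - m \<le> r + l" "period + 1 - m \<noteq> r + l + 1" "\<not> period + 1 - m \<le> 2 * r + l + 1"
      "period + 1 - m \<noteq> 2 * r + l + 2" "period - (period + 1 - m) = m - 1"
      using assms False by (auto simp: period_def)
    then have "boundary_seq (period + 1 - m) = init 0 (r + 1) (m - 1)" unfolding boundary_seq_def by simp
    then show ?thesis using assms False init_spiral_right[of m] unfolding boundary_def pos by simp
  qed
qed

lemma boundary_1: "on_edge a m \<Longrightarrow> boundary 1 a m = init 1 a m"
  unfolding on_edge_def
  using boundary_1_bottom boundary_1_left boundary_1_top boundary_1_right by auto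

definition with_boundary :: "int \<Rightarrow> (nat \<Rightarrow> nat \<Rightarrow> 'a) \<Rightarrow> nat \<Rightarrow> nat \<Rightarrow> 'a" where
  "with_boundary u s a m = (if inI r l a m then s a m else boundary u a m)"

definition evolve :: "int \<Rightarrow> (nat \<Rightarrow> nat \<Rightarrow> 'a) \<Rightarrow> (nat \<Rightarrow> nat \<Rightarrow> 'a) \<Rightarrow> nat \<Rightarrow> nat \<Rightarrow> 'a" where
  "evolve u prev cur a m =
     ((with_boundary u cur a (m - 1) \<otimes> with_boundary u cur a (m + 1)) \<otimes> (\<one> \<oplus> y a m u)) \<otimes> inv (prev a m)"

fun slice_up :: "nat \<Rightarrow> nat \<Rightarrow> nat \<Rightarrow> 'a" where
  "slice_up 0 = init 0"
| "slice_up (Suc 0) = init 1"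
| "slice_up (Suc (Suc n)) = evolve (int n + 1) (slice_up n) (slice_up (Suc n))"

fun slice_down :: "nat \<Rightarrow> nat \<Rightarrow> nat \<Rightarrow> 'a" where
  "slice_down 0 = init 1"
| "slice_down (Suc 0) = init 0"
| "slice_down (Suc (Suc n)) = evolve (- int n) (slice_down n) (slice_down (Suc n))"

definition slice :: "int \<Rightarrow> nat \<Rightarrow> nat \<Rightarrow> 'a" where
  "slice u = (if 0 \<le> u then slice_up (nat u) else slice_down (nat (1 - u)))"

lemma slice_0: "slice 0 = init 0" and slice_1: "slice 1 = init 1"
  by (simp_all add: slice_def)

lemma slice_down_eq_slice: "slice_down n = slice (1 - int n)"
proof (cases n rule: slice_down.cases)
  case (3 k)
  then have "nat (1 - (1 - int n)) = Suc (Suc k)" by simp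
  with 3 show ?thesis by (simp add: slice_def del: slice_down.simps)
qed (simp_all add: slice_def)

lemma slice_forward: "1 \<le> u \<Longrightarrow> slice (u + 1) = evolve u (slice (u - 1)) (slice u)"
proof -
  assume "1 \<le> u"
  then obtain n where u: "u = int n + 1" by (metis add.commute zle_iff_zadd)
  have "nat (int n + 1) = Suc n" "nat (int n + 1 + 1) = Suc (Suc n)" by simp_all
  then show ?thesis by (simp add: slice_def u)
qed

lemma slice_backward: "u \<le> 0 \<Longrightarrow> slice (u - 1) = evolve u (slice (u + 1)) (slice u)"
proof -
  assume "u \<le> 0"
  define n where "n = nat (- u)"
  have u: "u = - int n" using \<open>u \<le> 0\<close> by (simp add: n_def)
  have e: "1 - int (Suc (Suc n)) = u - 1" "1 - int n = u + 1" "1 - int (Suc n) = u" "- int n = u"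
    using u by simp_all
  have "slice_down (Suc (Suc n)) = evolve (- int n) (slice_down n) (slice_down (Suc n))"
    by (rule slice_down.simps(3))
  then show ?thesis by (simp only: slice_down_eq_slice e)
qed

lemma evolve_unit:
  assumes "inI r l a m" "prev a m \<in> Units S" "\<And>a m. inI r l a m \<Longrightarrow> cur a m \<in> Units S"
  shows "evolve u prev cur a m \<in> Units S"
  using assms one_plus_y_unit[OF assms(1)] by (simp add: evolve_def with_boundary_def)

lemma slice_unit: "inI r l a m \<Longrightarrow> slice u a m \<in> Units S"
proof -
  have "inI r l a m \<Longrightarrow> slice_up n a m \<in> Units S" for n a m
    by (induction n arbitrary: a m rule: slice_up.induct) (simp_all add: evolve_unit)
  moreover have "inI r l a m \<Longrightarrow> slice_down n a m \<in> Units S" for n a m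
    by (induction n arbitrary: a m rule: slice_down.induct) (simp_all add: evolve_unit)
  ultimately show "inI r l a m \<Longrightarrow> slice u a m \<in> Units S" by (simp add: slice_def)
qed

definition tau :: "nat \<Rightarrow> nat \<Rightarrow> int \<Rightarrow> 'a" where
  "tau a m u = (if inI r l a m then slice u a m else if a \<le> r + 1 \<and> m \<le> l then boundary u a m else \<one>)"

lemma tau_unit [simp]: "tau a m u \<in> Units S"
  by (simp add: tau_def slice_unit)

lemma tau_closed [simp]: "tau a m u \<in> carrier S"
  by (rule Units_closed[OF tau_unit])

lemma tau_outside: "\<not> inH r l a m \<Longrightarrow> tau a m u = \<one>"
  by (auto simp: tau_def inH_def inI_def)

lemma tau_init:
  assumes "inI r l a m \<or> on_edge a m"
  shows "tau a m 0 = init 0 a m" and "tau a m 1 = init 1 a m"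
proof -
  have "a \<le> r + 1" "m \<le> l" using assms by (auto simp: on_edge_def inI_iff)
  then show "tau a m 0 = init 0 a m" "tau a m 1 = init 1 a m"
    using assms by (auto simp: tau_def slice_0 slice_1 boundary_0 boundary_1)
qed

definition vert :: "int \<Rightarrow> nat \<Rightarrow> nat \<Rightarrow> 'a" where
  "vert u a m = tau a (m - 1) u \<otimes> tau a (m + 1) u"

definition horiz :: "int \<Rightarrow> nat \<Rightarrow> nat \<Rightarrow> 'a" where
  "horiz u a m = tau (a - 1) m u \<otimes> tau (a + 1) m u"

lemma vert_unit [simp]: "vert u a m \<in> Units S" and horiz_unit [simp]: "horiz u a m \<in> Units S"
  by (simp_all add: vert_def horiz_def)

lemma vert_closed [simp]: "vert u a m \<in> carrier S" and horiz_closed [simp]: "horiz u a m \<in> carrier S"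
  by (simp_all add: vert_def horiz_def)

lemma tau_evolution:
  assumes "inI r l a m"
  shows "tau a m (u - 1) \<otimes> tau a m (u + 1) = vert u a m \<otimes> (\<one> \<oplus> y a m u)"
proof -
  define X where "X = vert u a m \<otimes> (\<one> \<oplus> y a m u)"
  have X: "X \<in> carrier S" using one_plus_y_unit[OF assms] by (auto simp: X_def)
  have evolve: "evolve u s (slice u) a m = X \<otimes> inv (s a m)" for s
    using assms by (simp add: evolve_def X_def vert_def with_boundary_def tau_def inI_iff)
  have tau: "tau a m v = slice v a m" for v using assms by (simp add: tau_def)
  show ?thesis
  proof (cases "1 \<le> u")
    case True
    then have "tau a m (u + 1) = X \<otimes> inv (tau a m (u - 1))" by (simp add: tau slice_forward evolve)
    then show ?thesis using X by (simp add: frac_mult_cancel(3) X_def)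
  next
    case False
    then have "tau a m (u - 1) = X \<otimes> inv (tau a m (u + 1))" by (simp add: tau slice_backward evolve)
    then show ?thesis using X by (simp add: frac_mult_cancel(1) X_def)
  qed
qed

lemma tau_boundary: "a \<le> r + 1 \<Longrightarrow> m \<le> l \<Longrightarrow> \<not> inI r l a m \<Longrightarrow> tau a m u = boundary u a m"
  by (simp add: tau_def)

lemma tau_spiral_bottom: "1 \<le> a \<Longrightarrow> a \<le> r + 1 \<Longrightarrow> tau a 0 (u + 1) = tau (a - 1) 0 u"
  by (simp add: tau_boundary inI_iff boundary_def perimeter_pos_def algebra_simps of_nat_diff)

lemma tau_spiral_top: "a \<le> r \<Longrightarrow> tau a l (u + 1) = tau (a + 1) l u"
  using l_ge_2 by (simp add: tau_boundary inI_iff boundary_def perimeter_pos_def algebra_simps)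

lemma tau_spiral_left: "m \<le> l - 1 \<Longrightarrow> tau 0 m (u + 1) = tau 0 (m + 1) u"
  using l_ge_2 by (simp add: tau_boundary inI_iff boundary_def perimeter_pos_def algebra_simps)

lemma tau_spiral_right:
  assumes "1 \<le> m" "m \<le> l"
  shows "tau (r + 1) m (u + 1) = tau (r + 1) (m - 1) u"
proof -
  have "(u + 1 + int (period - m)) mod int period = (u + int (perimeter_pos (r + 1) (m - 1))) mod int period"
  proof (cases "m = 1")
    case True
    then have "perimeter_pos (r + 1) (m - 1) = 0" by (simp add: perimeter_pos_def)
    moreover have "u + 1 + int (period - m) = u + int period" using True by (simp add: period_def)
    ultimately show ?thesis by (simp only: mod_add_self2) simp
  next
    case False
    then have "perimeter_pos (r + 1) (m - 1) = period - (m - 1)"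
      using assms by (auto simp: perimeter_pos_def period_def)
    moreover have "u + 1 + int (period - m) = u + int (period - (m - 1))"
      using False assms by (simp add: period_def)
    ultimately show ?thesis by (simp only:)
  qed
  moreover have "perimeter_pos (r + 1) m = period - m"
    using assms l_ge_2 by (auto simp: perimeter_pos_def period_def)
  ultimately show ?thesis using assms by (simp add: tau_boundary inI_iff boundary_def)
qed

end

sublocale Y_system \<subseteq> tau: spiral_boundary S r l tau
proof
  show "tau (r + 1) m (u + 1) = tau (r + 1) (m - 1) u" if "1 \<le> m" "m \<le> l" for m u
    using that by (rule tau_spiral_right)
qed (simp_all add: tau_spiral_bottom tau_spiral_top tau_spiral_left)

context Y_system
begin

definition ratio_at :: "int \<Rightarrow> bool" where
  "ratio_at u \<longleftrightarrow> (\<forall>a m. inI r l a m \<longrightarrow> horiz u a m = y a m u \<otimes> vert u a m)"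

lemma neighbour_inI_or_on_edge:
  assumes "inI r l a m"
  shows "inI r l (a - 1) m \<or> on_edge (a - 1) m" "inI r l (a + 1) m \<or> on_edge (a + 1) m"
    "inI r l a (m - 1) \<or> on_edge a (m - 1)" "inI r l a (m + 1) \<or> on_edge a (m + 1)"
  using assms by (auto simp: inI_iff on_edge_def)

lemma ratio_at_0: "ratio_at 0" and ratio_at_1: "ratio_at 1"
proof -
  have "horiz v a m = y a m v \<otimes> vert v a m" if "inI r l a m" "v = 0 \<or> v = 1" for v a m
  proof -
    note nb = neighbour_inI_or_on_edge[OF that(1)]
    have "horiz v a m = init v (a - 1) m \<otimes> init v (a + 1) m"
      "vert v a m = init v a (m - 1) \<otimes> init v a (m + 1)"
      using that(2) tau_init[OF nb(1)] tau_init[OF nb(2)] tau_init[OF nb(3)] tau_init[OF nb(4)]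
      by (auto simp: horiz_def vert_def)
    with init_ratio[OF that(1), of v] show ?thesis by simp
  qed
  then show "ratio_at 0" "ratio_at 1" by (auto simp: ratio_at_def)
qed

lemma tau_evolution_ext:
  assumes "a \<le> r + 1" "1 \<le> m" "m + 1 \<le> l"
  shows "tau a m (u - 1) \<otimes> tau a m (u + 1) = vert u a m \<otimes> one_plus_Y S r y a m u"
proof (cases "a = 0 \<or> a = r + 1")
  case True
  with assms show ?thesis by (simp add: one_plus_Y_def vert_def tau.column_boundary_product)
next
  case False
  with assms have "inI r l a m" by (auto simp: inI_iff)
  with False show ?thesis by (simp add: one_plus_Y_def tau_evolution)
qed

lemma tau_mult_inv_one_plus_Yinv:
  assumes "ratio_at u" "1 \<le> a" "a \<le> r" "m \<le> l"
  shows "(tau a m (u - 1) \<otimes> tau a m (u + 1)) \<otimes> inv_one_plus_Yinv S l y a m u = horiz u a m"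
proof (cases "m = 0 \<or> m = l")
  case True
  with assms show ?thesis by (simp add: inv_one_plus_Yinv_def horiz_def tau.row_boundary_product)
next
  case False
  with assms have i: "inI r l a m" by (auto simp: inI_iff)
  have unit: "\<one> \<oplus> y a m u \<in> Units S" by (rule one_plus_y_unit[OF i])
  have "(vert u a m \<otimes> (\<one> \<oplus> y a m u)) \<otimes> (y a m u \<otimes> inv (\<one> \<oplus> y a m u)) =
      (y a m u \<otimes> vert u a m) \<otimes> ((\<one> \<oplus> y a m u) \<otimes> inv (\<one> \<oplus> y a m u))"
    using unit Units_closed[OF unit] Units_inv_closed[OF unit]
    by (simp add: m_ac del: Units_r_inv Units_l_inv)
  also have "\<dots> = horiz u a m"
    using assms(1) i unit unfolding ratio_at_def by simp
  finally show ?thesis using False by (simp add: tau_evolution[OF i] inv_one_plus_Yinv_def)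
qed

lemma vert_mult_vert_eq_horiz_mult_horiz:
  "vert u (a - 1) m \<otimes> vert u (a + 1) m = horiz u a (m - 1) \<otimes> horiz u a (m + 1)"
  by (simp add: vert_def horiz_def m_ac)

lemma horiz_evolution:
  assumes "inI r l a m"
  shows "horiz (u - 1) a m \<otimes> horiz (u + 1) a m =
    (vert u (a - 1) m \<otimes> vert u (a + 1) m) \<otimes> (one_plus_Y S r y (a - 1) m u \<otimes> one_plus_Y S r y (a + 1) m u)"
proof -
  from assms have "a - 1 \<le> r + 1" "a + 1 \<le> r + 1" "1 \<le> m" "m + 1 \<le> l" by (auto simp: inI_iff)
  then show ?thesis
    unfolding horiz_def
    by (simp only: mult_interchange tau_closed m_closed one_plus_Y_closed tau_evolution_ext vert_closed)
qed

lemma vert_evolution: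
  assumes "ratio_at u" "inI r l a m"
  shows "(vert (u - 1) a m \<otimes> vert (u + 1) a m) \<otimes>
      (inv_one_plus_Yinv S l y a (m - 1) u \<otimes> inv_one_plus_Yinv S l y a (m + 1) u) =
    horiz u a (m - 1) \<otimes> horiz u a (m + 1)"
proof -
  from assms(2) have "1 \<le> a" "a \<le> r" "m - 1 \<le> l" "m + 1 \<le> l"
    and J: "inI r l a (m - 1) \<or> m - 1 = 0 \<or> m - 1 = l" "inI r l a (m + 1) \<or> m + 1 = 0 \<or> m + 1 = l"
    by (auto simp: inI_iff)
  then show ?thesis
    unfolding vert_def
    by (simp only: mult_interchange tau_closed m_closed inv_one_plus_Yinv_closed[OF J(1)]
        inv_one_plus_Yinv_closed[OF J(2)] tau_mult_inv_one_plus_Yinv[OF assms(1)])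
qed

text \<open>The products of the two sides over \<open>v\<close> and \<open>w\<close> agree by the evolution equations and
  the Y-system relation at \<open>u\<close>; cancelling the factor at \<open>v\<close> gives the relation at \<open>w\<close>.\<close>
lemma ratio_at_transfer:
  assumes "ratio_at u" "ratio_at v" and vw: "(v, w) = (u - 1, u + 1) \<or> (v, w) = (u + 1, u - 1)"
  shows "ratio_at w"
  unfolding ratio_at_def
proof (intro allI impI)
  fix a m assume i: "inI r l a m"
  define M where "M = vert u (a - 1) m \<otimes> vert u (a + 1) m"
  define P where "P = one_plus_Y S r y (a - 1) m u \<otimes> one_plus_Y S r y (a + 1) m u"
  define J where "J = inv_one_plus_Yinv S l y a (m - 1) u \<otimes> inv_one_plus_Yinv S l y a (m + 1) u"
  from i have "inI r l a (m - 1) \<or> m - 1 = 0 \<or> m - 1 = l" "inI r l a (m + 1) \<or> m + 1 = 0 \<or> m + 1 = l"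
    by (auto simp: inI_iff)
  then have closed: "M \<in> carrier S" "P \<in> carrier S" "J \<in> carrier S"
    unfolding M_def P_def J_def by (simp_all add: inv_one_plus_Yinv_closed m_closed)
  have e: "horiz v a m \<otimes> horiz w a m = horiz (u - 1) a m \<otimes> horiz (u + 1) a m"
    "vert v a m \<otimes> vert w a m = vert (u - 1) a m \<otimes> vert (u + 1) a m"
    "y a m v \<otimes> y a m w = y a m (u - 1) \<otimes> y a m (u + 1)"
    using vw by (auto simp: m_comm)
  have product: "horiz v a m \<otimes> horiz w a m = M \<otimes> P"
    unfolding e(1) M_def P_def by (rule horiz_evolution[OF i])
  have vert_product: "(vert v a m \<otimes> vert w a m) \<otimes> J = M"
    unfolding e(2) M_def J_def vert_mult_vert_eq_horiz_mult_horiz by (rule vert_evolution[OF assms(1) i])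
  have Y_product: "y a m v \<otimes> y a m w = P \<otimes> J"
    unfolding e(3) P_def J_def by (rule Y_relation[OF i])
  have "horiz v a m = y a m v \<otimes> vert v a m"
    using assms(2) i by (simp add: ratio_at_def)
  then show "horiz w a m = y a m w \<otimes> vert w a m"
    by (intro ratio_propagation[OF horiz_closed y_closed y_closed vert_closed vert_closed closed
          horiz_unit product vert_product Y_product])
qed

lemma ratio_at_all: "ratio_at u"
proof -
  have "ratio_at u \<and> ratio_at (u + 1)"
  proof (induction u rule: int_induct[where k = 0])
    case base
    show ?case using ratio_at_0 ratio_at_1 by simp
  next
    case (step1 i)
    then show ?case using ratio_at_transfer[of "i + 1" i "i + 1 + 1"] by simp
  next
    case (step2 i)
    then show ?case using ratio_at_transfer[of i "i + 1" "i - 1"] by simp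
  qed
  then show ?thesis ..
qed

lemma T_ratio_tau:
  assumes "inI r l a m"
  shows "T_ratio S tau a m u = y a m u"
proof -
  have "T_ratio S tau a m u = horiz u a m \<otimes> inv (vert u a m)"
    by (simp add: T_ratio_def horiz_def vert_def)
  also have "\<dots> = y a m u"
    using ratio_at_all[of u] assms by (simp add: ratio_at_def frac_mult_cancel(2))
  finally show ?thesis .
qed

lemma tau_T_relation:
  assumes "inI r l a m"
  shows "tau a m (u - 1) \<otimes> tau a m (u + 1) = tau a (m - 1) u \<otimes> tau a (m + 1) u \<oplus> tau (a - 1) m u \<otimes> tau (a + 1) m u"
proof -
  have "tau a m (u - 1) \<otimes> tau a m (u + 1) = vert u a m \<oplus> vert u a m \<otimes> y a m u"
    using tau_evolution[OF assms] by (simp add: r_distr)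
  also have "\<dots> = vert u a m \<oplus> horiz u a m"
    using ratio_at_all[of u] assms by (simp add: ratio_at_def m_comm)
  finally show ?thesis by (simp add: vert_def horiz_def)
qed

lemma T_system_tau: "T_system S r l tau"
  by unfold_locales (simp_all add: tau_T_relation)

end

section \<open>The rings \<open>T~_l(A_r)\<close> and \<open>Y_l(A_r)\<close>\<close>

lemma ring_hom_id: "(\<lambda>x. x) \<in> ring_hom R R"
  by (rule ring_hom_memI) auto

lemma ring_hom_T_ratio:
  assumes "cring R" "cring S" "h \<in> ring_hom R S" "\<And>a m u. t a m u \<in> Units R"
  shows "h (T_ratio R t a m u) = T_ratio S (\<lambda>a m u. h (t a m u)) a m u"
proof -
  interpret R: cring R by fact
  have "t a m u \<in> carrier R" for a m u using assms(4) by blast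
  then show ?thesis
    using assms by (simp add: T_ratio_def ring_hom_mult ring_hom_inv)
qed

lemma cring_Tring: "cring (Tring r l)" and cring_Yring: "cring (Yring r l)"
  unfolding Tring_def Yring_def by (rule cring_presented_ring)+

definition Tgen_val :: "('a, 'b) ring_scheme \<Rightarrow> (nat \<Rightarrow> nat \<Rightarrow> int \<Rightarrow> 'a) \<Rightarrow> tgen \<Rightarrow> 'a" where
  "Tgen_val S t g = (case g of TG a m u \<Rightarrow> t a m u | TGinv a m u \<Rightarrow> inv\<^bsub>S\<^esub> (t a m u))"

definition Ygen_val ::
    "('a, 'b) ring_scheme \<Rightarrow> nat \<Rightarrow> nat \<Rightarrow> (nat \<Rightarrow> nat \<Rightarrow> int \<Rightarrow> 'a) \<Rightarrow> ygen \<Rightarrow> 'a" where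
  "Ygen_val S r l y g = (case g of
      YG a m u \<Rightarrow> y a m u
    | YGinv a m u \<Rightarrow> inv\<^bsub>S\<^esub> (y a m u)
    | WG a m u \<Rightarrow> if inI r l a m then inv\<^bsub>S\<^esub> (\<one>\<^bsub>S\<^esub> \<oplus>\<^bsub>S\<^esub> y a m u) else \<one>\<^bsub>S\<^esub>)"

context T_system
begin

lemma Tgen_val_closed: "Tgen_val S t g \<in> carrier S"
  by (cases g) (simp_all add: Tgen_val_def)

lemma eval_Trels:
  assumes "(x, z) \<in> Trels r l"
  shows "eval_rexpr S (Tgen_val S t) x = eval_rexpr S (Tgen_val S t) z"
  using assms unfolding Trels_def
  by (elim UnE CollectE exE conjE)
    (simp_all add: Tgen_val_def T_relation inI_def spiral_bottom spiral_top spiral_left spiral_right[simplified])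

lemma Tring_lift_hom: "lift_presented S (Tgen_val S t) \<in> ring_hom (Tring r l) S"
  unfolding Tring_def by (rule lift_presented_hom[OF Tgen_val_closed eval_Trels])

lemma Tring_lift_Tcls: "lift_presented S (Tgen_val S t) (Tcls r l a m u) = t a m u"
  unfolding Tcls_def by (simp add: lift_presented_rclass[OF Tgen_val_closed eval_Trels] Tgen_val_def)

end

context Y_system
begin

lemma Ygen_val_closed: "Ygen_val S r l y g \<in> carrier S"
  by (cases g) (auto simp: Ygen_val_def one_plus_y_unit)

lemma eval_onePY: "eval_rexpr S (Ygen_val S r l y) (onePY r l a m u) = one_plus_Y S r y a m u"
  by (simp add: onePY_def one_plus_Y_def Ygen_val_def)

lemma eval_invOnePYinv:
  "inI r l a m \<or> m = 0 \<or> m = l \<Longrightarrow>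
    eval_rexpr S (Ygen_val S r l y) (invOnePYinv r l a m u) = inv_one_plus_Yinv S l y a m u"
  by (auto simp: invOnePYinv_def inv_one_plus_Yinv_def Ygen_val_def)

lemma eval_Yrels:
  assumes "(x, z) \<in> Yrels r l"
  shows "eval_rexpr S (Ygen_val S r l y) x = eval_rexpr S (Ygen_val S r l y) z"
  using assms unfolding Yrels_def
proof (elim UnE CollectE exE conjE)
  fix a m u
  assume xz: "(x, z) = (RMul (Y a m (u - 1)) (Y a m (u + 1)),
      RMul (RMul (onePY r l (a - 1) m u) (onePY r l (a + 1) m u))
        (RMul (invOnePYinv r l a (m - 1) u) (invOnePYinv r l a (m + 1) u)))"
    and i: "inI r l a m"
  then have "inI r l a (m - 1) \<or> m - 1 = 0 \<or> m - 1 = l" "inI r l a (m + 1) \<or> m + 1 = 0 \<or> m + 1 = l"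
    by (auto simp: inI_iff)
  with xz show ?thesis
    by (simp add: eval_onePY eval_invOnePYinv Y_relation[OF i] Ygen_val_def)
qed (auto simp: Ygen_val_def one_plus_y_unit)

lemma Yring_lift_hom: "lift_presented S (Ygen_val S r l y) \<in> ring_hom (Yring r l) S"
  unfolding Yring_def by (rule lift_presented_hom[OF Ygen_val_closed eval_Yrels])

lemma Yring_lift_Ycls: "lift_presented S (Ygen_val S r l y) (Ycls r l a m u) = y a m u"
  unfolding Ycls_def by (simp add: lift_presented_rclass[OF Ygen_val_closed eval_Yrels] Ygen_val_def)

end

definition Tcls_ext :: "nat \<Rightarrow> nat \<Rightarrow> nat \<Rightarrow> nat \<Rightarrow> int \<Rightarrow> tgen rexpr set" where
  "Tcls_ext r l a m u = (if inH r l a m then Tcls r l a m u else \<one>\<^bsub>Tring r l\<^esub>)"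

definition Ycls_ext :: "nat \<Rightarrow> nat \<Rightarrow> nat \<Rightarrow> nat \<Rightarrow> int \<Rightarrow> ygen rexpr set" where
  "Ycls_ext r l a m u = (if inI r l a m then Ycls r l a m u else \<one>\<^bsub>Yring r l\<^esub>)"

lemma T_ratio_Tcls_ext:
  assumes "inI r l a m"
  shows "T_ratio (Tring r l) (Tcls_ext r l) a m u =
    (Tcls r l (a - 1) m u \<otimes>\<^bsub>Tring r l\<^esub> Tcls r l (a + 1) m u) \<otimes>\<^bsub>Tring r l\<^esub>
    inv\<^bsub>Tring r l\<^esub> (Tcls r l a (m - 1) u \<otimes>\<^bsub>Tring r l\<^esub> Tcls r l a (m + 1) u)"
proof -
  from assms have "inH r l (a - 1) m" "inH r l (a + 1) m" "inH r l a (m - 1)" "inH r l a (m + 1)"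
    by (auto simp: inI_iff inH_def)
  then show ?thesis by (simp add: T_ratio_def Tcls_ext_def)
qed

lemma Tcls_unit:
  assumes "inH r l a m"
  shows "Tcls r l a m u \<in> Units (Tring r l)"
proof -
  have "Tcls r l a m u \<in> carrier (Tring r l)" "rclass (Trels r l) (Gen (TGinv a m u)) \<in> carrier (Tring r l)"
    unfolding Tring_def Tcls_def using assms by (auto intro!: rclass_in_carrier simp: Tgens_def)
  moreover have "Tcls r l a m u \<otimes>\<^bsub>Tring r l\<^esub> rclass (Trels r l) (Gen (TGinv a m u)) = \<one>\<^bsub>Tring r l\<^esub>"
    unfolding Tring_def Tcls_def presented_ring_mult presented_ring_one
    by (rule rclass_eqI) (use assms in \<open>auto simp: Trels_def\<close>)
  ultimately show ?thesis by (rule cring.mult_eq_one_imp_inv(1)[OF cring_Tring])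
qed

lemma Tcls_T_relation:
  assumes "inI r l a m"
  shows "Tcls r l a m (u - 1) \<otimes>\<^bsub>Tring r l\<^esub> Tcls r l a m (u + 1) =
    Tcls r l a (m - 1) u \<otimes>\<^bsub>Tring r l\<^esub> Tcls r l a (m + 1) u \<oplus>\<^bsub>Tring r l\<^esub>
    Tcls r l (a - 1) m u \<otimes>\<^bsub>Tring r l\<^esub> Tcls r l (a + 1) m u"
  unfolding Tring_def Tcls_def presented_ring_mult presented_ring_add
  by (rule rclass_eqI) (unfold Trels_def, use assms in \<open>auto simp: inI_def\<close>)

lemma Tcls_spiral_bottom: "1 \<le> a \<Longrightarrow> a \<le> r + 1 \<Longrightarrow> Tcls r l a 0 (u + 1) = Tcls r l (a - 1) 0 u"
  unfolding Tcls_def by (rule rclass_eqI) (unfold Trels_def, blast)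

lemma Tcls_spiral_top: "a \<le> r \<Longrightarrow> Tcls r l a l (u + 1) = Tcls r l (a + 1) l u"
  unfolding Tcls_def by (rule rclass_eqI) (unfold Trels_def, blast)

lemma Tcls_spiral_left: "m \<le> l - 1 \<Longrightarrow> Tcls r l 0 m (u + 1) = Tcls r l 0 (m + 1) u"
  unfolding Tcls_def by (rule rclass_eqI) (unfold Trels_def, blast)

lemma Tcls_spiral_right: "1 \<le> m \<Longrightarrow> m \<le> l \<Longrightarrow> Tcls r l (r + 1) m (u + 1) = Tcls r l (r + 1) (m - 1) u"
  unfolding Tcls_def by (rule rclass_eqI) (unfold Trels_def, blast)

lemma T_system_Tring:
  assumes "1 \<le> l"
  shows "T_system (Tring r l) r l (Tcls_ext r l)"
proof -
  interpret cring "Tring r l" by (rule cring_Tring)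
  have unit: "Tcls_ext r l a m u \<in> Units (Tring r l)" for a m u
    by (simp add: Tcls_ext_def Tcls_unit)
  show ?thesis
  proof unfold_locales
    show "Tcls_ext r l a m u \<in> carrier (Tring r l)" for a m u
      using unit by blast
    show "Tcls_ext r l a m (u - 1) \<otimes>\<^bsub>Tring r l\<^esub> Tcls_ext r l a m (u + 1) =
      Tcls_ext r l a (m - 1) u \<otimes>\<^bsub>Tring r l\<^esub> Tcls_ext r l a (m + 1) u \<oplus>\<^bsub>Tring r l\<^esub>
      Tcls_ext r l (a - 1) m u \<otimes>\<^bsub>Tring r l\<^esub> Tcls_ext r l (a + 1) m u" if "inI r l a m" for a m u
    proof -
      from that have "a - 1 \<le> r + 1" "a + 1 \<le> r + 1" "a \<le> r + 1" "m - 1 \<le> l" "m + 1 \<le> l" "m \<le> l"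
        by (auto simp: inI_iff)
      with Tcls_T_relation[OF that] show ?thesis by (simp add: Tcls_ext_def inH_def)
    qed
    show "Tcls_ext r l a 0 (u + 1) = Tcls_ext r l (a - 1) 0 u" if "1 \<le> a" "a \<le> r + 1" for a u
      using that Tcls_spiral_bottom[OF that] by (auto simp: Tcls_ext_def inH_def)
    show "Tcls_ext r l a l (u + 1) = Tcls_ext r l (a + 1) l u" if "a \<le> r" for a u
      using that Tcls_spiral_top[OF that] by (auto simp: Tcls_ext_def inH_def)
    show "Tcls_ext r l 0 m (u + 1) = Tcls_ext r l 0 (m + 1) u" if "m \<le> l - 1" for m u
      using that assms Tcls_spiral_left[OF that] by (auto simp: Tcls_ext_def inH_def)
    show "Tcls_ext r l (r + 1) m (u + 1) = Tcls_ext r l (r + 1) (m - 1) u" if "1 \<le> m" "m \<le> l" for m u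
      using that Tcls_spiral_right[OF that] by (auto simp: Tcls_ext_def inH_def)
  qed (rule unit)
qed

lemma (in T_system) Tring_lift_Tcls_ext:
  "lift_presented S (Tgen_val S t) (Tcls_ext r l a m u) = (if inH r l a m then t a m u else \<one>)"
  using ring_hom_one[OF Tring_lift_hom] by (simp add: Tcls_ext_def Tring_lift_Tcls)

lemma Ycls_unit:
  assumes "inI r l a m"
  shows "Ycls r l a m u \<in> Units (Yring r l)"
    and "inv\<^bsub>Yring r l\<^esub> (Ycls r l a m u) = rclass (Yrels r l) (Gen (YGinv a m u))"
    and "\<one>\<^bsub>Yring r l\<^esub> \<oplus>\<^bsub>Yring r l\<^esub> Ycls r l a m u \<in> Units (Yring r l)"
    and "inv\<^bsub>Yring r l\<^esub> (\<one>\<^bsub>Yring r l\<^esub> \<oplus>\<^bsub>Yring r l\<^esub> Ycls r l a m u) = rclass (Yrels r l) (Gen (WG a m u))"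
proof -
  interpret cring "Yring r l" by (rule cring_Yring)
  have gen: "rclass (Yrels r l) (Gen g) \<in> carrier (Yring r l)" if "g \<in> Ygens r l" for g
    unfolding Yring_def using that by (intro rclass_in_carrier) simp
  have Y: "Ycls r l a m u \<in> carrier (Yring r l)"
    unfolding Ycls_def using assms by (intro gen) (auto simp: Ygens_def)
  have Yinv: "rclass (Yrels r l) (Gen (YGinv a m u)) \<in> carrier (Yring r l)"
    and W: "rclass (Yrels r l) (Gen (WG a m u)) \<in> carrier (Yring r l)"
    using assms by (auto intro!: gen simp: Ygens_def)
  have "Ycls r l a m u \<otimes>\<^bsub>Yring r l\<^esub> rclass (Yrels r l) (Gen (YGinv a m u)) = \<one>\<^bsub>Yring r l\<^esub>"
    unfolding Yring_def Ycls_def presented_ring_mult presented_ring_one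
    by (rule rclass_eqI) (use assms in \<open>auto simp: Yrels_def\<close>)
  from mult_eq_one_imp_inv[OF Y Yinv this]
  show "Ycls r l a m u \<in> Units (Yring r l)"
    "inv\<^bsub>Yring r l\<^esub> (Ycls r l a m u) = rclass (Yrels r l) (Gen (YGinv a m u))" .
  have "(\<one>\<^bsub>Yring r l\<^esub> \<oplus>\<^bsub>Yring r l\<^esub> Ycls r l a m u) \<otimes>\<^bsub>Yring r l\<^esub> rclass (Yrels r l) (Gen (WG a m u)) =
      \<one>\<^bsub>Yring r l\<^esub>"
    unfolding Yring_def Ycls_def presented_ring_mult presented_ring_one presented_ring_add
    by (rule rclass_eqI) (use assms in \<open>auto simp: Yrels_def\<close>)
  from mult_eq_one_imp_inv[OF _ W this] Y
  show "\<one>\<^bsub>Yring r l\<^esub> \<oplus>\<^bsub>Yring r l\<^esub> Ycls r l a m u \<in> Units (Yring r l)"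
    "inv\<^bsub>Yring r l\<^esub> (\<one>\<^bsub>Yring r l\<^esub> \<oplus>\<^bsub>Yring r l\<^esub> Ycls r l a m u) = rclass (Yrels r l) (Gen (WG a m u))"
    by simp_all
qed

lemma Y_system_Yring:
  assumes "1 \<le> r" "2 \<le> l"
  shows "Y_system (Yring r l) r l (Ycls_ext r l)"
proof -
  interpret cring "Yring r l" by (rule cring_Yring)
  have one_plus_Y: "one_plus_Y (Yring r l) r (Ycls_ext r l) a m u = rclass (Yrels r l) (onePY r l a m u)"
    if "a \<le> r + 1" "1 \<le> m" "m \<le> l - 1" for a m u
    using that
    by (auto simp: one_plus_Y_def onePY_def Ycls_ext_def Ycls_def inI_def Yring_def
        presented_ring_one presented_ring_add)
  have inv_one_plus_Yinv:
    "inv_one_plus_Yinv (Yring r l) l (Ycls_ext r l) a m u = rclass (Yrels r l) (invOnePYinv r l a m u)"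
    if "1 \<le> a" "a \<le> r" "m \<le> l" for a m u
  proof (cases "m = 0 \<or> m = l")
    case False
    with that have "inI r l a m" by (auto simp: inI_def)
    with False show ?thesis
      by (simp add: inv_one_plus_Yinv_def invOnePYinv_def Ycls_ext_def Ycls_unit(4))
        (simp add: Ycls_def Yring_def presented_ring_mult)
  qed (auto simp: inv_one_plus_Yinv_def invOnePYinv_def Yring_def presented_ring_one)
  show ?thesis
  proof (unfold_locales)
    fix a m u assume i: "inI r l a m"
    then show "\<one>\<^bsub>Yring r l\<^esub> \<oplus>\<^bsub>Yring r l\<^esub> Ycls_ext r l a m u \<in> Units (Yring r l)"
      by (simp add: Ycls_ext_def Ycls_unit)
    from i have b: "a - 1 \<le> r + 1" "a + 1 \<le> r + 1" "1 \<le> m" "m \<le> l - 1" "1 \<le> a" "a \<le> r"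
      "m - 1 \<le> l" "m + 1 \<le> l"
      by (auto simp: inI_def)
    have "Ycls_ext r l a m (u - 1) \<otimes>\<^bsub>Yring r l\<^esub> Ycls_ext r l a m (u + 1) =
        rclass (Yrels r l) (RMul (Y a m (u - 1)) (Y a m (u + 1)))"
      using i by (simp add: Ycls_ext_def Ycls_def Yring_def presented_ring_mult)
    also have "\<dots> = rclass (Yrels r l)
        (RMul (RMul (onePY r l (a - 1) m u) (onePY r l (a + 1) m u))
          (RMul (invOnePYinv r l a (m - 1) u) (invOnePYinv r l a (m + 1) u)))"
      by (rule rclass_eqI) (use i in \<open>auto simp: Yrels_def\<close>)
    also have "\<dots> = (one_plus_Y (Yring r l) r (Ycls_ext r l) (a - 1) m u \<otimes>\<^bsub>Yring r l\<^esub>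
        one_plus_Y (Yring r l) r (Ycls_ext r l) (a + 1) m u) \<otimes>\<^bsub>Yring r l\<^esub>
      (inv_one_plus_Yinv (Yring r l) l (Ycls_ext r l) a (m - 1) u \<otimes>\<^bsub>Yring r l\<^esub>
        inv_one_plus_Yinv (Yring r l) l (Ycls_ext r l) a (m + 1) u)"
      unfolding one_plus_Y[OF b(1,3,4)] one_plus_Y[OF b(2,3,4)]
        inv_one_plus_Yinv[OF b(5,6,7)] inv_one_plus_Yinv[OF b(5,6,8)]
      by (simp add: Yring_def presented_ring_mult)
    finally show "Ycls_ext r l a m (u - 1) \<otimes>\<^bsub>Yring r l\<^esub> Ycls_ext r l a m (u + 1) =
      (one_plus_Y (Yring r l) r (Ycls_ext r l) (a - 1) m u \<otimes>\<^bsub>Yring r l\<^esub>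
        one_plus_Y (Yring r l) r (Ycls_ext r l) (a + 1) m u) \<otimes>\<^bsub>Yring r l\<^esub>
      (inv_one_plus_Yinv (Yring r l) l (Ycls_ext r l) a (m - 1) u \<otimes>\<^bsub>Yring r l\<^esub>
        inv_one_plus_Yinv (Yring r l) l (Ycls_ext r l) a (m + 1) u)" .
  qed (use assms Ycls_unit(1) in \<open>auto simp: Ycls_ext_def\<close>)
qed

lemma Yring_hom_ext:
  assumes "cring S" "f \<in> ring_hom (Yring r l) S" "g \<in> ring_hom (Yring r l) S"
    and Ycls: "\<And>a m u. inI r l a m \<Longrightarrow> f (Ycls r l a m u) = g (Ycls r l a m u)"
    and "x \<in> carrier (Yring r l)"
  shows "f x = g x"
proof -
  interpret Y: cring "Yring r l" by (rule cring_Yring)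
  have hom_inv: "h (inv\<^bsub>Yring r l\<^esub> z) = inv\<^bsub>S\<^esub> (h z)"
    if "h \<in> ring_hom (Yring r l) S" "z \<in> Units (Yring r l)" for h z
    by (rule ring_hom_inv[OF cring_Yring assms(1) that])
  have hom_one_plus: "h (\<one>\<^bsub>Yring r l\<^esub> \<oplus>\<^bsub>Yring r l\<^esub> z) = \<one>\<^bsub>S\<^esub> \<oplus>\<^bsub>S\<^esub> h z"
    if "h \<in> ring_hom (Yring r l) S" "z \<in> carrier (Yring r l)" for h z
    using that by (simp add: ring_hom_add ring_hom_one)
  have "f (rclass (Yrels r l) (Gen y)) = g (rclass (Yrels r l) (Gen y))" if "y \<in> Ygens r l" for y
    using that unfolding Ygens_def
  proof (elim UnE CollectE exE conjE)
    fix a m u assume y: "y = YGinv a m u" and i: "inI r l a m"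
    note unit = Ycls_unit(1)[OF i]
    show ?thesis
      unfolding y Ycls_unit(2)[OF i, symmetric] hom_inv[OF assms(2) unit] hom_inv[OF assms(3) unit]
      by (simp only: Ycls[OF i])
  next
    fix a m u assume y: "y = WG a m u" and i: "inI r l a m"
    note unit = Ycls_unit(3)[OF i] and closed = Y.Units_closed[OF Ycls_unit(1)[OF i]]
    show ?thesis
      unfolding y Ycls_unit(4)[OF i, symmetric] hom_inv[OF assms(2) unit] hom_inv[OF assms(3) unit]
        hom_one_plus[OF assms(2) closed] hom_one_plus[OF assms(3) closed]
      by (simp only: Ycls[OF i])
  qed (use Ycls in \<open>auto simp: Ycls_def\<close>)
  then show ?thesis
    using presented_ring_hom_ext[OF assms(1) assms(2,3)[unfolded Yring_def] _ assms(5)[unfolded Yring_def]]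
    by blast
qed

theorem proposition5p9:
  fixes r l :: nat
  assumes "r \<ge> 1" and "l \<ge> 2"
  shows "\<exists>\<phi>. \<phi> \<in> ring_hom (Yring r l) (Tring r l) \<and>
           (\<forall>a m u. 1 \<le> a \<and> a \<le> r \<and> 1 \<le> m \<and> m \<le> l - 1 \<longrightarrow>
              \<phi> (Ycls r l a m u) =
                (Tcls r l (a - 1) m u \<otimes>\<^bsub>Tring r l\<^esub> Tcls r l (a + 1) m u) \<otimes>\<^bsub>Tring r l\<^esub>
                inv\<^bsub>Tring r l\<^esub> (Tcls r l a (m - 1) u \<otimes>\<^bsub>Tring r l\<^esub> Tcls r l a (m + 1) u)) \<and>
           (\<exists>\<psi>. \<psi> \<in> ring_hom (Tring r l) (Yring r l) \<and>
              (\<forall>y \<in> carrier (Yring r l). \<psi> (\<phi> y) = y))"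
proof -
  interpret T: T_system "Tring r l" r l "Tcls_ext r l" by (rule T_system_Tring) (use assms in simp)
  interpret Y: Y_system "Yring r l" r l "Ycls_ext r l" by (rule Y_system_Yring[OF assms])
  interpret phi: Y_system "Tring r l" r l "T_ratio (Tring r l) (Tcls_ext r l)"
    by (rule T.Y_system_T_ratio[OF assms])
  interpret psi: T_system "Yring r l" r l Y.tau by (rule Y.T_system_tau)
  define \<phi> where "\<phi> = lift_presented (Tring r l) (Ygen_val (Tring r l) r l (T_ratio (Tring r l) (Tcls_ext r l)))"
  define \<psi> where "\<psi> = lift_presented (Yring r l) (Tgen_val (Yring r l) Y.tau)"
  have \<psi>_Tcls_ext: "\<psi> (Tcls_ext r l a m u) = Y.tau a m u" for a m u
    by (simp add: \<psi>_def psi.Tring_lift_Tcls_ext Y.tau_outside)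
  have "\<psi> (\<phi> (Ycls r l a m u)) = Ycls r l a m u" if "inI r l a m" for a m u
    using that phi.Yring_lift_Ycls
    by (simp add: \<phi>_def \<psi>_def ring_hom_T_ratio[OF cring_Tring cring_Yring psi.Tring_lift_hom T.t_unit]
        \<psi>_Tcls_ext[unfolded \<psi>_def] Y.T_ratio_tau Ycls_ext_def)
  then have "\<psi> (\<phi> y) = y" if "y \<in> carrier (Yring r l)" for y
    using Yring_hom_ext[OF cring_Yring ring_hom_trans[OF phi.Yring_lift_hom psi.Tring_lift_hom] ring_hom_id _ that]
    by (simp add: \<phi>_def \<psi>_def)
  moreover have "\<phi> (Ycls r l a m u) =
      (Tcls r l (a - 1) m u \<otimes>\<^bsub>Tring r l\<^esub> Tcls r l (a + 1) m u) \<otimes>\<^bsub>Tring r l\<^esub>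
      inv\<^bsub>Tring r l\<^esub> (Tcls r l a (m - 1) u \<otimes>\<^bsub>Tring r l\<^esub> Tcls r l a (m + 1) u)" if "inI r l a m" for a m u
    using that phi.Yring_lift_Ycls by (simp add: \<phi>_def T_ratio_Tcls_ext)
  ultimately show ?thesis
    using phi.Yring_lift_hom psi.Tring_lift_hom unfolding \<phi>_def \<psi>_def inI_def by blast
qed

end
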